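(* Let $\alpha$ be a filter of length $l+1$ and order $p\ge 1$, and let $q\ge 1$ be an integer. If $H<p-\frac{1}{4q}$, then $$\frac{1}{N-l}\sum_{i,j=l}^{N}\big(\rho^{\alpha,N}_H(j-i)\big)^{2q}\;\xrightarrow[N\to\infty]{}\;\sum_{v\in\mathbb Z}\varphi_{H,\alpha}(v)^{2q}<\infty .$$ Equivalently, with $f_{N,2q}:=\frac{c^k_{2q}}{(2q)!}\frac{1}{N-l}\sum_{i=l}^N \frac{C_{i,\alpha}^{\otimes 2q}}{(\pi^{\alpha,N}_H(0))^{q}}$, one has $(N-l)(2q)!\|f_{N,2q}\|^2_{\mathcal H^{\otimes 2q}}\to \frac{(c^k_{2q})^2}{(2q)!}\sum_{v\in\mathbb Z}\varphi_{H,\alpha}(v)^{2q}$. In the case $p=q=1$, $H=3/4$, the quantity $\frac{1}{(N-l)\log(N-l)}\sum_{i,j=l}^{N}\big(\rho^{\alpha,N}_H(j-i)\big)^{2}$ converges, as $N\to\infty$, to a finite strictly positive constant.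
   Context: Fix $H\in(1/2,1)$. Let $W^H=\{W^H_s(A): s\ge 0, A\in\mathcal B_b(\mathbb R)\}$ be a centered Gaussian field with $\mathbf E[W^H_s(A)W^H_r(B)]=R_H(s,r)\lambda(A\cap B)$, where $R_H(s,r)=\frac12(s^{2H}+r^{2H}-|s-r|^{2H})$ and $\lambda$ is Lebesgue measure. Let $u(t,x)=\int_0^t\int_{\mathbb R}G_1(t-s,x-y)\,W^H(ds,dy)$ (Wiener integral), with $G_1(t,x)=\frac12\mathbf 1_{\{|x|<t\}}$; this is the mild solution of $\partial_t^2 u=\partial_x^2u+\dot W^H$ on $\mathbb R$ with zero initial position and velocity. Fix $t>1$. For $x,y\in[0,1]$, $\mathbf E[u(t,x)u(t,y)]=\frac12\big(c_H|x-y|^{2H+1}-\frac t2|x-y|^{2H}+\frac{t^{2H+1}}{2H+1}\big)$ with $c_H=\frac{4H-1}{4(2H+1)}$. A filter of length $l+1$ ($l\ge 0$) and order $p\ge1$ is a vector $\alpha=(\alpha_0,\dots,\alpha_l)$ with $\sum_{q=0}^l\alpha_q q^r=0$ for $0\le r\le p-1$ and $\sum_{q=0}^l\alpha_q q^p\neq 0$ (convention $0^0=1$). For $N>l$ and $i=l,\dots,N$ set $U^\alpha(i/N)=\sum_{r=0}^l\alpha_r u(t,(i-r)/N)$. For $x>0$, $j\in\mathbb Z$ let $\Phi_{x,\alpha}(j)=\sum_{r_1,r_2=0}^l\alpha_{r_1}\alpha_{r_2}|j+r_1-r_2|^{2x}$ and $\varphi_{H,\alpha}(j)=\Phi_{H,\alpha}(j)/\Phi_{H,\alpha}(0)$.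 Then $\pi^{\alpha,N}_H(j):=\mathbf E[U^\alpha(i/N)U^\alpha((i+j)/N)]=k_1N^{-2H}\Phi_{H,\alpha}(j)+k_2N^{-2H-1}\Phi_{H+\frac12,\alpha}(j)$ with $k_1=-t/4$, $k_2=\frac{4H-1}{8(2H+1)}$, and $\rho^{\alpha,N}_H(j):=\pi^{\alpha,N}_H(j)/\pi^{\alpha,N}_H(0)$. $\mathcal H$ is the Hilbert space obtained as closure of the span of $\{e_x:x\in[0,1]\}$ with $\langle e_x,e_y\rangle=\mathbf E[u(t,x)u(t,y)]$, and $C_{i,\alpha}=\sum_{q=0}^l\alpha_q e_{(i-q)/N}$, so $\langle C_{i,\alpha},C_{j,\alpha}\rangle_{\mathcal H}=\pi^{\alpha,N}_H(j-i)$. For an integer $k\ge1$, $c^k_{2q}=\frac{1}{(2q)!}\prod_{i=0}^{q-1}(k-2i)$. *)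

theory Defs
  imports "HOL-Analysis.Analysis"
begin

text \<open>A filter alpha = (alpha_0,...,alpha_l) of length l+1 and order p
  (indices 0..l; values of alpha outside 0..l are irrelevant).  Note 0^0 = 1.\<close>
definition is_filter :: "(nat \<Rightarrow> real) \<Rightarrow> nat \<Rightarrow> nat \<Rightarrow> bool" where
  "is_filter \<alpha> l p \<longleftrightarrow>
     (\<forall>r<p. (\<Sum>q=0..l. \<alpha> q * real q ^ r) = 0) \<and> (\<Sum>q=0..l. \<alpha> q * real q ^ p) \<noteq> 0"

definition Phi :: "real \<Rightarrow> (nat \<Rightarrow> real) \<Rightarrow> nat \<Rightarrow> int \<Rightarrow> real" where
  "Phi x \<alpha> l j = (\<Sum>r1=0..l. \<Sum>r2=0..l.
      \<alpha> r1 * \<alpha> r2 * \<bar>real_of_int j + real r1 - real r2\<bar> powr (2 * x))"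

definition phi :: "real \<Rightarrow> (nat \<Rightarrow> real) \<Rightarrow> nat \<Rightarrow> int \<Rightarrow> real" where
  "phi H \<alpha> l j = Phi H \<alpha> l j / Phi H \<alpha> l 0"

text \<open>pi^{alpha,N}_H(j) = E[U^alpha(i/N) U^alpha((i+j)/N)], via the closed form,
  with k1 = -t/4 and k2 = (4H-1)/(8(2H+1)).\<close>
definition piN :: "real \<Rightarrow> real \<Rightarrow> (nat \<Rightarrow> real) \<Rightarrow> nat \<Rightarrow> nat \<Rightarrow> int \<Rightarrow> real" where
  "piN t H \<alpha> l N j =
     (- t / 4) * real N powr (- 2 * H) * Phi H \<alpha> l j
     + ((4 * H - 1) / (8 * (2 * H + 1))) * real N powr (- 2 * H - 1) * Phi (H + 1/2) \<alpha> l j"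

definition rhoN :: "real \<Rightarrow> real \<Rightarrow> (nat \<Rightarrow> real) \<Rightarrow> nat \<Rightarrow> nat \<Rightarrow> int \<Rightarrow> real" where
  "rhoN t H \<alpha> l N j = piN t H \<alpha> l N j / piN t H \<alpha> l N 0"

end

theory Submission
  imports Defs "HOL-Real_Asymp.Real_Asymp"
begin

text \<open>
  Both parts rest on the asymptotics of \<open>Phi x \<alpha> l v\<close> as \<open>v \<rightarrow> \<infinity>\<close>.  Writing
  \<open>Phi x \<alpha> l v\<close> as the sum of \<open>\<alpha> r1 * \<alpha> r2 * (v + r1 - r2) powr 2x\<close> and expanding in Taylor series around \<open>v\<close>, the
  vanishing moments of a filter of order \<open>p\<close> kill all terms of order below \<open>2p\<close>, so
  \<open>Phi x \<alpha> l v = K v powr (2x - 2p) + O(v powr (2x - 2p - 1))\<close> with \<open>K \<noteq> 0\<close>.  Since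
  \<open>|x - y| powr 2H\<close> is conditionally negative definite (Schoenberg), \<open>Phi H \<alpha> l 0 < 0\<close>.

  Up to a factor that cancels in \<open>rhoN\<close>, \<open>piN\<close> equals \<open>Phi H + \<kappa> Phi (H + 1/2) / N\<close>, so
  \<open>rhoN N v \<rightarrow> phi v\<close> and \<open>|rhoN N v| \<le> R v powr (2H - 2p)\<close> uniformly for \<open>v \<le> N\<close>.  Sorting the
  Toeplitz double sum by diagonals turns the normalised sum into
  \<open>(n+1)/n + 2 \<Sum>v=1..n. (n+1-v)/n * rhoN v ^ 2q\<close>.  If \<open>2q(2H - 2p) < -1\<close> the majorant is summable
  and Tannery's theorem gives the limit \<open>\<Sum>v\<in>\<int>. phi v ^ 2q\<close>.  For \<open>p = 1\<close>, \<open>H = 3/4\<close> the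
  terms behave like \<open>K\<^sup>2 / (Phi 0\<^sup>2 v)\<close>, and the weighted harmonic sum grows like \<open>n ln n\<close>.
\<close>

definition filter_moment :: "(nat \<Rightarrow> real) \<Rightarrow> nat \<Rightarrow> nat \<Rightarrow> real" where
  "filter_moment \<alpha> l m = (\<Sum>q=0..l. \<alpha> q * real q ^ m)"

definition filter_cross_moment :: "(nat \<Rightarrow> real) \<Rightarrow> nat \<Rightarrow> nat \<Rightarrow> real" where
  "filter_cross_moment \<alpha> l k = (\<Sum>r1=0..l. \<Sum>r2=0..l. \<alpha> r1 * \<alpha> r2 * (real r1 - real r2) ^ k)"

lemma filter_cross_moment_binomial:
  "filter_cross_moment \<alpha> l k =
     (\<Sum>m\<le>k. real (k choose m) * (-1)^(k-m) * (filter_moment \<alpha> l m * filter_moment \<alpha> l (k-m)))"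
proof -
  have "filter_cross_moment \<alpha> l k = (\<Sum>r1=0..l. \<Sum>r2=0..l. \<Sum>m\<le>k.
          real (k choose m) * (-1)^(k-m) * ((\<alpha> r1 * real r1 ^ m) * (\<alpha> r2 * real r2 ^ (k-m))))"
    unfolding filter_cross_moment_def
  proof (intro sum.cong refl)
    fix r1 r2
    have "(real r1 - real r2) ^ k = (\<Sum>m\<le>k. real (k choose m) * real r1 ^ m * (- real r2) ^ (k - m))"
      using binomial_ring[of "real r1" "- real r2" k] by simp
    then show "\<alpha> r1 * \<alpha> r2 * (real r1 - real r2) ^ k = (\<Sum>m\<le>k.
          real (k choose m) * (-1)^(k-m) * ((\<alpha> r1 * real r1 ^ m) * (\<alpha> r2 * real r2 ^ (k-m))))"
      by (simp add: sum_distrib_left power_minus[of "real r2"] mult_ac)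
  qed
  also have "\<dots> = (\<Sum>m\<le>k. real (k choose m) * (-1)^(k-m) *
      (\<Sum>r1=0..l. \<Sum>r2=0..l. (\<alpha> r1 * real r1 ^ m) * (\<alpha> r2 * real r2 ^ (k-m))))"
    by (simp add: sum.swap[of _ "{0..l}" "{..k}"] sum_distrib_left)
  finally show ?thesis
    unfolding filter_moment_def sum_product .
qed

lemma filter_moment_eq_0: "is_filter \<alpha> l p \<Longrightarrow> m < p \<Longrightarrow> filter_moment \<alpha> l m = 0"
  unfolding is_filter_def filter_moment_def by auto

lemma filter_moment_order_nonzero: "is_filter \<alpha> l p \<Longrightarrow> filter_moment \<alpha> l p \<noteq> 0"
  unfolding is_filter_def filter_moment_def by auto

lemma sum_filter_eq_0: "is_filter \<alpha> l p \<Longrightarrow> p \<ge> 1 \<Longrightarrow> (\<Sum>q=0..l. \<alpha> q) = 0"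
  using filter_moment_eq_0[of \<alpha> l p 0] by (simp add: filter_moment_def)

text \<open>In the binomial expansion of the cross moment of order \<open>k \<le> 2p\<close> every term contains a
  vanishing moment, except the middle term when \<open>k = 2p\<close>.\<close>

lemma filter_cross_moment_eq_0:
  assumes "is_filter \<alpha> l p" "k < 2*p"
  shows "filter_cross_moment \<alpha> l k = 0"
  unfolding filter_cross_moment_binomial
proof (intro sum.neutral ballI)
  fix m assume "m \<in> {..k}"
  then have "m < p \<or> k - m < p" using assms(2) by auto
  then show "real (k choose m) * (-1)^(k-m) * (filter_moment \<alpha> l m * filter_moment \<alpha> l (k-m)) = 0"
    using filter_moment_eq_0[OF assms(1)] by auto
qed

lemma filter_cross_moment_order:
  assumes "is_filter \<alpha> l p"
  shows "filter_cross_moment \<alpha> l (2*p) = real (2*p choose p) * (-1)^p * (filter_moment \<alpha> l p)^2"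
proof -
  have "filter_cross_moment \<alpha> l (2*p) = (\<Sum>m\<in>{p}.
      real (2*p choose m) * (-1)^(2*p-m) * (filter_moment \<alpha> l m * filter_moment \<alpha> l (2*p-m)))"
    unfolding filter_cross_moment_binomial
  proof (intro sum.mono_neutral_right ballI)
    fix m assume "m \<in> {..2*p} - {p}"
    then have "m < p \<or> 2*p - m < p" by auto
    then show "real (2*p choose m) * (-1)^(2*p-m) *
        (filter_moment \<alpha> l m * filter_moment \<alpha> l (2*p-m)) = 0"
      using filter_moment_eq_0[OF assms] by auto
  qed auto
  then show ?thesis by (simp add: mult_2 power2_eq_square)
qed

lemma filter_cross_moment_order_nonzero:
  "is_filter \<alpha> l p \<Longrightarrow> filter_cross_moment \<alpha> l (2*p) \<noteq> 0"
  by (simp add: filter_cross_moment_order filter_moment_order_nonzero)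

lemma has_real_derivative_gbinomial_powr:
  fixes e y :: real
  assumes "y > 0"
  shows "((\<lambda>y. fact m * (e gchoose m) * y powr (e - real m)) has_real_derivative
           fact (Suc m) * (e gchoose Suc m) * y powr (e - real (Suc m))) (at y)"
proof -
  have "(e - real m) * (e gchoose m) = real (Suc m) * (e gchoose Suc m)"
    using gbinomial_mult_1[of e m] by (simp add: algebra_simps)
  moreover have "e - real m - 1 = e - real (Suc m)" by simp
  ultimately have coeff: "fact m * (e gchoose m) * ((e - real m) * y powr (e - real m - 1))
      = fact (Suc m) * (e gchoose Suc m) * y powr (e - real (Suc m))"
    by (simp only: fact_Suc of_nat_mult) (simp add: mult_ac)
  show ?thesis
    unfolding coeff[symmetric] by (intro DERIV_cmult has_real_derivative_powr assms)
qed

lemma powr_le_between_half_double: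
  fixes c t f :: real
  assumes "c > 0" "c/2 \<le> t" "t \<le> 2*c"
  shows "t powr f \<le> 2 powr \<bar>f\<bar> * c powr f"
proof (cases "f \<ge> 0")
  case True
  have "t powr f \<le> (2*c) powr f" using assms True by (intro powr_mono2) auto
  then show ?thesis using True by (simp add: powr_mult)
next
  case False
  have "t powr f \<le> (c/2) powr f" using assms False by (intro powr_mono2') auto
  also have "\<dots> = c powr f / 2 powr f" by (rule powr_divide)
  also have "\<dots> = 2 powr (-f) * c powr f" by (simp only: powr_minus divide_inverse mult.commute)
  finally show ?thesis using False by simp
qed

lemma powr_taylor_remainder:
  fixes c d e :: real
  assumes "c > 0" "\<bar>d\<bar> \<le> c/2" "n > 0"
  shows "\<bar>(c+d) powr e - (\<Sum>m<n. (e gchoose m) * c powr (e - real m) * d^m)\<bar>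
           \<le> \<bar>e gchoose n\<bar> * 2 powr \<bar>e - real n\<bar> * c powr (e - real n) * \<bar>d\<bar>^n"
proof (cases "d = 0")
  case True
  then have "(\<Sum>m<n. (e gchoose m) * c powr (e - real m) * d^m) = c powr e"
    using assms(3) by (simp add: sum.lessThan_Suc_shift zero_power gr0_conv_Suc)
  then show ?thesis using True by simp
next
  case False
  define D where "D m y = fact m * (e gchoose m) * y powr (e - real m)" for m y
  have "\<exists>t. (if c + d < c then c + d < t \<and> t < c else c < t \<and> t < c + d) \<and>
      (c + d) powr e = (\<Sum>m<n. D m c / fact m * ((c+d) - c)^m) + D n t / fact n * ((c+d) - c)^n"
  proof (rule Taylor[of n D "\<lambda>y. y powr e" "c/2" "2*c"])
    show "D 0 = (\<lambda>y. y powr e)" by (rule ext) (simp add: D_def)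
    show "\<forall>m t. m < n \<and> c/2 \<le> t \<and> t \<le> 2*c \<longrightarrow> DERIV (D m) t :> D (Suc m) t"
    proof (intro allI impI)
      fix m t assume "m < n \<and> c/2 \<le> t \<and> t \<le> 2*c"
      then have "t > 0" using assms(1) by linarith
      then show "DERIV (D m) t :> D (Suc m) t"
        unfolding D_def by (rule has_real_derivative_gbinomial_powr)
    qed
  qed (use assms False in linarith)+
  then obtain t where t_between: "if c + d < c then c + d < t \<and> t < c else c < t \<and> t < c + d"
    and eq: "(c + d) powr e = (\<Sum>m<n. D m c / fact m * ((c+d) - c)^m) + D n t / fact n * ((c+d) - c)^n"
    by blast
  have t: "c/2 \<le> t" "t \<le> 2*c"
    using t_between assms(2) by (auto split: if_splits)
  have "\<bar>(c+d) powr e - (\<Sum>m<n. (e gchoose m) * c powr (e - real m) * d^m)\<bar>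
      = \<bar>e gchoose n\<bar> * t powr (e - real n) * \<bar>d\<bar>^n"
    using eq by (simp add: D_def abs_mult power_abs del: of_nat_Suc)
  also have "\<dots> \<le> \<bar>e gchoose n\<bar> * (2 powr \<bar>e - real n\<bar> * c powr (e - real n)) * \<bar>d\<bar>^n"
    by (intro mult_right_mono mult_left_mono powr_le_between_half_double assms(1) t) auto
  finally show ?thesis by (simp add: mult_ac)
qed

section \<open>Asymptotics of \<open>Phi\<close>\<close>

lemma double_filter_sum_polynomial:
  "(\<Sum>r1=0..l. \<Sum>r2=0..l. \<alpha> r1 * \<alpha> r2 * (\<Sum>m<n. c m * (real r1 - real r2)^m))
     = (\<Sum>m<n. c m * filter_cross_moment \<alpha> l m)"
  unfolding filter_cross_moment_def sum_distrib_left
  by (simp add: sum.swap[of _ "{..<n}"] mult_ac)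

lemma abs_double_filter_sum_le:
  fixes \<alpha> :: "nat \<Rightarrow> real" and g :: "nat \<Rightarrow> nat \<Rightarrow> real"
  assumes "\<And>r1 r2. r1 \<le> l \<Longrightarrow> r2 \<le> l \<Longrightarrow> \<bar>g r1 r2\<bar> \<le> B"
  shows "\<bar>\<Sum>r1=0..l. \<Sum>r2=0..l. \<alpha> r1 * \<alpha> r2 * g r1 r2\<bar> \<le> (\<Sum>r=0..l. \<bar>\<alpha> r\<bar>)^2 * B"
proof -
  have "\<bar>\<Sum>r1=0..l. \<Sum>r2=0..l. \<alpha> r1 * \<alpha> r2 * g r1 r2\<bar>
      \<le> (\<Sum>r1=0..l. \<bar>\<Sum>r2=0..l. \<alpha> r1 * \<alpha> r2 * g r1 r2\<bar>)"
    by (rule sum_abs)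
  also have "\<dots> \<le> (\<Sum>r1=0..l. \<Sum>r2=0..l. \<bar>\<alpha> r1 * \<alpha> r2 * g r1 r2\<bar>)"
    by (intro sum_mono sum_abs)
  also have "\<dots> \<le> (\<Sum>r1=0..l. \<Sum>r2=0..l. \<bar>\<alpha> r1\<bar> * \<bar>\<alpha> r2\<bar> * B)"
    by (intro sum_mono) (auto simp: abs_mult intro!: mult_left_mono assms)
  also have "\<dots> = (\<Sum>r=0..l. \<bar>\<alpha> r\<bar>)^2 * B"
    unfolding power2_eq_square sum_product by (simp only: sum_distrib_right)
  finally show ?thesis .
qed

lemma double_filter_sum_polynomial_order:
  assumes "is_filter \<alpha> l p"
  shows "(\<Sum>r1=0..l. \<Sum>r2=0..l. \<alpha> r1 * \<alpha> r2 * (\<Sum>m<2*p+1. c m * (real r1 - real r2)^m))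
     = c (2*p) * filter_cross_moment \<alpha> l (2*p)"
  unfolding double_filter_sum_polynomial by (simp add: filter_cross_moment_eq_0[OF assms])

definition Phi_leading_coeff :: "real \<Rightarrow> (nat \<Rightarrow> real) \<Rightarrow> nat \<Rightarrow> nat \<Rightarrow> real" where
  "Phi_leading_coeff x \<alpha> l p = ((2*x) gchoose (2*p)) * filter_cross_moment \<alpha> l (2*p)"

definition Phi_remainder_coeff :: "real \<Rightarrow> (nat \<Rightarrow> real) \<Rightarrow> nat \<Rightarrow> nat \<Rightarrow> real" where
  "Phi_remainder_coeff x \<alpha> l p = (\<Sum>r=0..l. \<bar>\<alpha> r\<bar>)^2 *
     (\<bar>(2*x) gchoose (2*p+1)\<bar> * 2 powr \<bar>2*x - real (2*p+1)\<bar> * real l ^ (2*p+1))"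

lemma Phi_remainder_coeff_nonneg: "Phi_remainder_coeff x \<alpha> l p \<ge> 0"
  unfolding Phi_remainder_coeff_def by simp

text \<open>Taylor expansion of \<open>(v + d) powr 2x\<close> to order \<open>2p\<close> around \<open>v\<close>: the filter kills every
  term of order below \<open>2p\<close>.\<close>

lemma Phi_asymptotic_expansion:
  fixes v :: nat
  assumes filter: "is_filter \<alpha> l p" and v: "v \<ge> 2*l" "v \<ge> 1"
  shows "\<bar>Phi x \<alpha> l (int v) - Phi_leading_coeff x \<alpha> l p * real v powr (2*x - 2*real p)\<bar>
           \<le> Phi_remainder_coeff x \<alpha> l p * real v powr (2*x - 2*real p - 1)"
proof -
  define e where "e = 2*x"
  define n where "n = 2*p+1"
  define c where "c m = (e gchoose m) * real v powr (e - real m)" for m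
  define P where "P d = (\<Sum>m<n. c m * d^m)" for d :: real
  define B where "B = \<bar>e gchoose n\<bar> * 2 powr \<bar>e - real n\<bar> * real v powr (e - real n) * real l ^ n"
  have Phi_eq: "Phi x \<alpha> l (int v)
      = (\<Sum>r1=0..l. \<Sum>r2=0..l. \<alpha> r1 * \<alpha> r2 * (real v + (real r1 - real r2)) powr e)"
    unfolding Phi_def e_def using v by (intro sum.cong refl) (auto simp: add_diff_eq)
  have leading: "(\<Sum>r1=0..l. \<Sum>r2=0..l. \<alpha> r1 * \<alpha> r2 * P (real r1 - real r2))
      = Phi_leading_coeff x \<alpha> l p * real v powr (2*x - 2*real p)"
    unfolding P_def n_def double_filter_sum_polynomial_order[OF filter]
    by (simp add: c_def Phi_leading_coeff_def e_def)
  have remainder: "\<bar>(real v + (real r1 - real r2)) powr e - P (real r1 - real r2)\<bar> \<le> B"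
    if "r1 \<le> l" "r2 \<le> l" for r1 r2
  proof -
    have d: "\<bar>real r1 - real r2\<bar> \<le> real l" using that by auto
    have "\<bar>(real v + (real r1 - real r2)) powr e - P (real r1 - real r2)\<bar>
        \<le> \<bar>e gchoose n\<bar> * 2 powr \<bar>e - real n\<bar> * real v powr (e - real n) * \<bar>real r1 - real r2\<bar> ^ n"
      unfolding P_def c_def using d v by (intro powr_taylor_remainder) (auto simp: n_def)
    also have "\<dots> \<le> B"
      unfolding B_def using d by (intro mult_left_mono power_mono) auto
    finally show ?thesis .
  qed
  have "Phi x \<alpha> l (int v) - Phi_leading_coeff x \<alpha> l p * real v powr (2*x - 2*real p)
      = (\<Sum>r1=0..l. \<Sum>r2=0..l. \<alpha> r1 * \<alpha> r2 * ((real v + (real r1 - real r2)) powr e - P (real r1 - real r2)))"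
    unfolding Phi_eq leading[symmetric] by (simp add: sum_subtractf right_diff_distrib)
  also have "\<bar>\<dots>\<bar> \<le> (\<Sum>r=0..l. \<bar>\<alpha> r\<bar>)^2 * B"
    by (rule abs_double_filter_sum_le) (rule remainder)
  also have "\<dots> = Phi_remainder_coeff x \<alpha> l p * real v powr (2*x - 2*real p - 1)"
  proof -
    have "e - real n = 2*x - 2*real p - 1" unfolding e_def n_def by simp
    then have "B = \<bar>(2*x) gchoose (2*p+1)\<bar> * 2 powr \<bar>2*x - real (2*p+1)\<bar>
        * real v powr (2*x - 2*real p - 1) * real l ^ (2*p+1)"
      unfolding B_def by (simp only: e_def n_def)
    then show ?thesis unfolding Phi_remainder_coeff_def by (simp only: mult_ac)
  qed
  finally show ?thesis .
qed

lemma eventually_powr_bound_imp_powr_bound: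
  fixes g :: "nat \<Rightarrow> real"
  assumes "\<And>v. v \<ge> V0 \<Longrightarrow> \<bar>g v\<bar> \<le> C * real v powr f"
  shows "\<exists>C'. \<forall>v\<ge>1. \<bar>g v\<bar> \<le> C' * real v powr f"
proof -
  define M where "M = (\<Sum>v<V0. \<bar>g v\<bar>)"
  define m where "m = min 1 (real V0 powr f)"
  define C' where "C' = max (max C 0) (M / m)"
  have "\<bar>g v\<bar> \<le> C' * real v powr f" if v: "v \<ge> 1" for v
  proof (cases "v \<ge> V0")
    case True
    have "\<bar>g v\<bar> \<le> C * real v powr f" using assms True by blast
    also have "\<dots> \<le> C' * real v powr f" unfolding C'_def by (intro mult_right_mono) auto
    finally show ?thesis .
  next
    case False
    have m: "0 < m" "m \<le> real v powr f"
    proof -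
      show "0 < m" unfolding m_def using False v by simp
      show "m \<le> real v powr f"
      proof (cases "f \<ge> 0")
        case True
        then have "1 \<le> real v powr f" using v by (intro ge_one_powr_ge_zero) auto
        then show ?thesis unfolding m_def by simp
      next
        case False
        have "real V0 powr f \<le> real v powr f"
          using False v \<open>\<not> v \<ge> V0\<close> by (intro powr_mono2') auto
        then show ?thesis unfolding m_def by simp
      qed
    qed
    have "\<bar>g v\<bar> \<le> M" unfolding M_def using False by (intro member_le_sum) auto
    also have "\<dots> = M / m * m" using m by simp
    also have "\<dots> \<le> C' * real v powr f"
      unfolding C'_def using m by (intro mult_mono) (auto simp: M_def intro: sum_nonneg)
    finally show ?thesis .
  qed
  then show ?thesis by blast
qed

lemma abs_Phi_le_powr:
  assumes "is_filter \<alpha> l p"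
  shows "\<exists>C. \<forall>v\<ge>1. \<bar>Phi x \<alpha> l (int v)\<bar> \<le> C * real v powr (2*x - 2*real p)"
proof (rule eventually_powr_bound_imp_powr_bound)
  fix v :: nat assume v: "v \<ge> 2*l + 1"
  let ?K = "Phi_leading_coeff x \<alpha> l p" and ?C = "Phi_remainder_coeff x \<alpha> l p"
  have "\<bar>?K * real v powr (2*x - 2*real p)\<bar> = \<bar>?K\<bar> * real v powr (2*x - 2*real p)"
    by (simp add: abs_mult)
  then have "\<bar>Phi x \<alpha> l (int v)\<bar> \<le> \<bar>?K\<bar> * real v powr (2*x - 2*real p) + ?C * real v powr (2*x - 2*real p - 1)"
    using Phi_asymptotic_expansion[OF assms, of v x] v by linarith
  also have "\<dots> \<le> \<bar>?K\<bar> * real v powr (2*x - 2*real p) + ?C * real v powr (2*x - 2*real p)"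
    using v Phi_remainder_coeff_nonneg by (intro add_left_mono mult_left_mono powr_mono) auto
  finally show "\<bar>Phi x \<alpha> l (int v)\<bar> \<le> (\<bar>?K\<bar> + ?C) * real v powr (2*x - 2*real p)"
    by (simp add: algebra_simps)
qed

section \<open>Conditional negative definiteness of \<open>|x - y| powr 2H\<close>\<close>

text \<open>Expanding \<open>exp (2 s x\<^sub>i x\<^sub>j)\<close> as a power series writes the form as a nonnegative combination
  of squares.\<close>

lemma gaussian_kernel_quadratic_form_nonneg:
  fixes c x :: "'i \<Rightarrow> real"
  assumes "finite I" "s \<ge> 0"
  shows "0 \<le> (\<Sum>i\<in>I. \<Sum>j\<in>I. c i * c j * exp (- s * (x i - x j)^2))"
proof -
  define u where "u i = c i * exp (- s * (x i)^2)" for i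
  have kernel: "c i * c j * exp (- s * (x i - x j)^2) = u i * u j * exp (2 * s * x i * x j)" for i j
  proof -
    have "exp (- s * (x i - x j)^2) = exp (- s * (x i)^2) * exp (- s * (x j)^2) * exp (2 * s * x i * x j)"
      unfolding exp_add[symmetric] by (simp add: power2_eq_square algebra_simps)
    then show ?thesis unfolding u_def by (simp add: mult_ac)
  qed
  have series_term: "(\<Sum>i\<in>I. \<Sum>j\<in>I. u i * u j * ((2 * s * x i * x j)^k / fact k))
      = (2 * s)^k / fact k * (\<Sum>i\<in>I. u i * x i ^ k)^2" for k
  proof -
    have "(\<Sum>i\<in>I. u i * x i ^ k)^2 = (\<Sum>i\<in>I. \<Sum>j\<in>I. (u i * x i ^ k) * (u j * x j ^ k))"
      unfolding power2_eq_square by (rule sum_product)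
    moreover have "u i * u j * ((2 * s * x i * x j)^k / fact k)
        = (2 * s)^k / fact k * ((u i * x i ^ k) * (u j * x j ^ k))" for i j
      by (simp add: power_mult_distrib)
    ultimately show ?thesis by (simp only: sum_distrib_left)
  qed
  have "(\<lambda>k. \<Sum>i\<in>I. \<Sum>j\<in>I. u i * u j * ((2 * s * x i * x j)^k / fact k))
      sums (\<Sum>i\<in>I. \<Sum>j\<in>I. u i * u j * exp (2 * s * x i * x j))"
    using sums_mult[OF exp_converges[of "2 * s * x i * x j" for i j], of "u i * u j" for i j]
    by (intro sums_sum) (simp add: divide_inverse scaleR_conv_of_real mult.commute)
  then have squares: "(\<lambda>k. (2 * s)^k / fact k * (\<Sum>i\<in>I. u i * x i ^ k)^2)
      sums (\<Sum>i\<in>I. \<Sum>j\<in>I. c i * c j * exp (- s * (x i - x j)^2))"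
    unfolding series_term kernel .
  show ?thesis
    by (rule sums_le[OF _ sums_zero squares]) (use assms in simp)
qed

lemma gbinomial_alternating_nonpos:
  fixes H :: real
  assumes "0 < H" "H < 1" "k \<ge> 1"
  shows "(H gchoose k) * (-1)^k \<le> 0"
  using assms(3)
proof (induction k rule: dec_induct)
  case base
  then show ?case using assms by simp
next
  case (step n)
  have rec: "real (Suc n) * (H gchoose Suc n) = (H - real n) * (H gchoose n)"
    using gbinomial_mult_1[of H n] by (simp add: algebra_simps)
  have "real (Suc n) * ((H gchoose Suc n) * (-1)^Suc n) = (real n - H) * ((H gchoose n) * (-1)^n)"
    by (simp only: mult.assoc[symmetric] rec) (simp add: algebra_simps)
  also have "\<dots> \<le> 0"
    using step assms by (intro mult_nonneg_nonpos[OF _ step.IH]) auto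
  finally show ?case by (smt (verit) mult_pos_pos of_nat_0_less_iff zero_less_Suc)
qed

text \<open>For \<open>0 < \<theta> < 1\<close> the binomial series of \<open>(1 - \<theta> G) powr H\<close> has nonpositive coefficients after
  the constant one, which the condition \<open>\<Sum> c = 0\<close> removes.\<close>

lemma scaled_one_minus_gaussian_powr_cond_neg_def:
  fixes c x :: "'i \<Rightarrow> real"
  assumes "finite I" "sum c I = 0" "s > 0" "0 < \<theta>" "\<theta> < 1" "0 < H" "H < 1"
  shows "(\<Sum>i\<in>I. \<Sum>j\<in>I. c i * c j * (1 - \<theta> * exp (- s * (x i - x j)^2)) powr H) \<le> 0"
proof -
  define G where "G i j = exp (- s * (x i - x j)^2)" for i j
  have G: "0 < G i j" "G i j \<le> 1" for i j
    unfolding G_def using assms(3) by (auto simp: mult_nonneg_nonneg)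
  have small: "\<bar>- (\<theta> * G i j)\<bar> < 1" for i j
  proof -
    have pos: "0 < \<theta> * G i j" using G[of i j] assms(4) by simp
    have "\<theta> * G i j \<le> \<theta>" using G[of i j] assms(4) by (intro mult_left_le) auto
    then show ?thesis using assms(5) by (simp only: abs_minus_cancel abs_of_pos[OF pos])
  qed
  have "(\<lambda>k. (H gchoose k) * (- (\<theta> * G i j))^k) sums (1 - \<theta> * G i j) powr H" for i j
    unfolding diff_conv_add_uminus by (rule gen_binomial_real[OF small])
  then have series: "(\<lambda>k. \<Sum>i\<in>I. \<Sum>j\<in>I. c i * c j * ((H gchoose k) * (- (\<theta> * G i j))^k))
      sums (\<Sum>i\<in>I. \<Sum>j\<in>I. c i * c j * (1 - \<theta> * G i j) powr H)"
    by (intro sums_sum sums_mult)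
  have terms_nonpos: "(\<Sum>i\<in>I. \<Sum>j\<in>I. c i * c j * ((H gchoose k) * (- (\<theta> * G i j))^k)) \<le> 0" for k
  proof (cases "k = 0")
    case True
    then show ?thesis using assms(2) by (simp add: sum_product[symmetric])
  next
    case False
    have "G i j ^ k = exp (- (real k * s) * (x i - x j)^2)" for i j
      unfolding G_def exp_of_nat_mult[symmetric] by simp
    then have "c i * c j * ((H gchoose k) * (- (\<theta> * G i j))^k)
        = ((H gchoose k) * (-1)^k) * \<theta>^k * (c i * c j * exp (- (real k * s) * (x i - x j)^2))" for i j
      unfolding power_minus[of "\<theta> * G i j"] power_mult_distrib by (simp only: mult_ac)
    then have "(\<Sum>i\<in>I. \<Sum>j\<in>I. c i * c j * ((H gchoose k) * (- (\<theta> * G i j))^k))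
        = ((H gchoose k) * (-1)^k) * \<theta>^k * (\<Sum>i\<in>I. \<Sum>j\<in>I. c i * c j * exp (- (real k * s) * (x i - x j)^2))"
      by (simp only: sum_distrib_left)
    also have "\<dots> \<le> 0"
      using False assms
      by (intro mult_nonpos_nonneg mult_nonpos_nonneg gbinomial_alternating_nonpos
          gaussian_kernel_quadratic_form_nonneg) auto
    finally show ?thesis .
  qed
  show ?thesis
    using sums_le[OF _ series sums_zero] terms_nonpos unfolding G_def by blast
qed

lemma one_minus_gaussian_powr_cond_neg_def:
  fixes c x :: "'i \<Rightarrow> real"
  assumes "finite I" "sum c I = 0" "s > 0" "0 < H" "H < 1"
  shows "(\<Sum>i\<in>I. \<Sum>j\<in>I. c i * c j * (1 - exp (- s * (x i - x j)^2)) powr H) \<le> 0"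
proof -
  define \<theta> where "\<theta> m = 1 - 1 / real (m + 2)" for m :: nat
  have \<theta>: "\<theta> \<longlonglongrightarrow> 1" "0 < \<theta> m" "\<theta> m < 1" for m
    unfolding \<theta>_def by (real_asymp, auto simp: field_simps)
  define G where "G i j = exp (- s * (x i - x j)^2)" for i j
  have G: "0 < G i j" "G i j \<le> 1" for i j
    unfolding G_def using assms(3) by (auto simp: mult_nonneg_nonneg)
  have "(\<lambda>m. \<Sum>i\<in>I. \<Sum>j\<in>I. c i * c j * (1 - \<theta> m * G i j) powr H)
      \<longlonglongrightarrow> (\<Sum>i\<in>I. \<Sum>j\<in>I. c i * c j * (1 - 1 * G i j) powr H)"
  proof (intro tendsto_sum tendsto_mult_left tendsto_powr' tendsto_diff tendsto_mult_right
      tendsto_const \<theta>(1) disjI2 conjI always_eventually allI)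
    fix i j m
    have "\<theta> m * G i j \<le> 1 * 1" using \<theta>(2,3)[of m] G[of i j] by (intro mult_mono) auto
    then show "0 \<le> 1 - \<theta> m * G i j" by simp
  qed (rule assms(4))
  moreover have "(\<Sum>i\<in>I. \<Sum>j\<in>I. c i * c j * (1 - \<theta> m * G i j) powr H) \<le> 0" for m
    unfolding G_def using assms \<theta>(2,3) by (intro scaled_one_minus_gaussian_powr_cond_neg_def)
  ultimately have "(\<Sum>i\<in>I. \<Sum>j\<in>I. c i * c j * (1 - 1 * G i j) powr H) \<le> 0"
    by (intro LIMSEQ_le_const2) blast+
  then show ?thesis unfolding G_def by simp
qed

text \<open>Schoenberg: \<open>|x - y| powr 2H\<close> is conditionally negative definite for \<open>0 < H < 1\<close>, being the
  limit of \<open>(m (1 - exp (- (x - y)\<^sup>2 / m))) powr H\<close>.\<close>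

lemma abs_diff_powr_cond_neg_def:
  fixes c x :: "'i \<Rightarrow> real"
  assumes "finite I" "sum c I = 0" "0 < H" "H < 1"
  shows "(\<Sum>i\<in>I. \<Sum>j\<in>I. c i * c j * \<bar>x i - x j\<bar> powr (2*H)) \<le> 0"
proof -
  define F where "F m i j = real (Suc m) * (1 - exp (- (1 / real (Suc m)) * (x i - x j)^2))" for m i j
  have F_nonneg: "F m i j \<ge> 0" for m i j
    unfolding F_def by (intro mult_nonneg_nonneg) (auto simp: mult_nonneg_nonneg)
  have F_lim: "(\<lambda>m. F m i j) \<longlonglongrightarrow> (x i - x j)^2" for i j
  proof (cases "x i = x j")
    case False
    then have "(x i - x j)^2 > 0" by simp
    then show ?thesis unfolding F_def by real_asymp
  qed (simp add: F_def)
  have "(\<lambda>m. \<Sum>i\<in>I. \<Sum>j\<in>I. c i * c j * F m i j powr H)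
      \<longlonglongrightarrow> (\<Sum>i\<in>I. \<Sum>j\<in>I. c i * c j * ((x i - x j)^2) powr H)"
    using F_nonneg assms(3)
    by (intro tendsto_sum tendsto_mult_left tendsto_powr' F_lim disjI2 conjI always_eventually allI) auto
  moreover have "(\<Sum>i\<in>I. \<Sum>j\<in>I. c i * c j * F m i j powr H) \<le> 0" for m
  proof -
    have "F m i j powr H = real (Suc m) powr H * (1 - exp (- (1 / real (Suc m)) * (x i - x j)^2)) powr H"
      for i j unfolding F_def by (rule powr_mult)
    then have "(\<Sum>i\<in>I. \<Sum>j\<in>I. c i * c j * F m i j powr H) = real (Suc m) powr H *
        (\<Sum>i\<in>I. \<Sum>j\<in>I. c i * c j * (1 - exp (- (1 / real (Suc m)) * (x i - x j)^2)) powr H)"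
      by (simp add: sum_distrib_left mult_ac)
    also have "\<dots> \<le> 0"
      using assms by (intro mult_nonneg_nonpos one_minus_gaussian_powr_cond_neg_def) auto
    finally show ?thesis .
  qed
  ultimately have "(\<Sum>i\<in>I. \<Sum>j\<in>I. c i * c j * ((x i - x j)^2) powr H) \<le> 0"
    by (intro LIMSEQ_le_const2) blast+
  moreover have "((x i - x j)^2) powr H = \<bar>x i - x j\<bar> powr (2*H)" for i j
    by (simp add: powr_powr[symmetric])
  ultimately show ?thesis by simp
qed

section \<open>The sign of \<open>Phi\<close> at zero\<close>

lemma Phi_uminus: "Phi x \<alpha> l (-v) = Phi x \<alpha> l v"
  unfolding Phi_def
  by (subst sum.swap) (intro sum.cong refl, simp add: abs_minus_commute algebra_simps)

text \<open>Conditional negative definiteness applied to the points \<open>r\<close> and \<open>r + v\<close> (\<open>0 \<le> r \<le> l\<close>),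
  weighted by \<open>\<alpha> r\<close> and \<open>s \<alpha> r\<close>.\<close>

lemma Phi_quadratic_form_nonpos:
  assumes "is_filter \<alpha> l p" "p \<ge> 1" "0 < H" "H < 1"
  shows "(1 + s^2) * Phi H \<alpha> l 0 + 2 * s * Phi H \<alpha> l v \<le> 0"
proof -
  define I where "I = {0..l} <+> {0..l}"
  define y where "y = case_sum real (\<lambda>r. real r + real_of_int v)"
  define c where "c = case_sum \<alpha> (\<lambda>r. s * \<alpha> r)"
  have "sum c I = (1 + s) * (\<Sum>r=0..l. \<alpha> r)"
    unfolding I_def c_def by (simp add: sum.Plus sum_distrib_left[symmetric] distrib_right)
  also have "\<dots> = 0" using sum_filter_eq_0[OF assms(1,2)] by simp
  finally have "(\<Sum>i\<in>I. \<Sum>j\<in>I. c i * c j * \<bar>y i - y j\<bar> powr (2*H)) \<le> 0"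
    using assms(3,4) by (intro abs_diff_powr_cond_neg_def) (auto simp: I_def)
  also have "(\<Sum>i\<in>I. \<Sum>j\<in>I. c i * c j * \<bar>y i - y j\<bar> powr (2*H))
      = (1 + s^2) * Phi H \<alpha> l 0 + s * Phi H \<alpha> l (-v) + s * Phi H \<alpha> l v"
    unfolding I_def y_def c_def Phi_def
    by (simp add: sum.Plus sum.distrib sum_distrib_left algebra_simps power2_eq_square)
  finally show ?thesis by (simp add: Phi_uminus)
qed

lemma abs_Phi_le_Phi_zero:
  "is_filter \<alpha> l p \<Longrightarrow> p \<ge> 1 \<Longrightarrow> 0 < H \<Longrightarrow> H < 1 \<Longrightarrow> \<bar>Phi H \<alpha> l v\<bar> \<le> - Phi H \<alpha> l 0"
  using Phi_quadratic_form_nonpos[of \<alpha> l p H 1 v] Phi_quadratic_form_nonpos[of \<alpha> l p H "-1" v]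
  by simp

lemma gbinomial_nonzero_non_integer:
  fixes a :: real
  assumes "a \<notin> \<nat>"
  shows "a gchoose k \<noteq> 0"
proof -
  have "a - of_nat i \<noteq> 0" for i
    using assms of_nat_in_Nats[of i] by force
  then show ?thesis unfolding gbinomial_prod_rev by simp
qed

lemma Phi_leading_coeff_nonzero:
  assumes "is_filter \<alpha> l p" "1/2 < H" "H < 1"
  shows "Phi_leading_coeff H \<alpha> l p \<noteq> 0"
proof -
  have "2*H \<notin> \<nat>"
  proof
    assume "2*H \<in> \<nat>"
    then obtain n :: nat where "2*H = real n" by (auto elim: Nats_cases)
    with assms(2,3) have "1 < n" "n < 2" by simp_all
    then show False by simp
  qed
  then show ?thesis
    unfolding Phi_leading_coeff_def
    using gbinomial_nonzero_non_integer filter_cross_moment_order_nonzero[OF assms(1)] by simp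
qed

lemma Phi_not_identically_zero:
  assumes "is_filter \<alpha> l p" "1/2 < H" "H < 1"
  shows "\<exists>j. Phi H \<alpha> l j \<noteq> 0"
proof (rule ccontr)
  assume "\<nexists>j. Phi H \<alpha> l j \<noteq> 0"
  then have Phi_0: "Phi H \<alpha> l j = 0" for j by simp
  define K where "K = \<bar>Phi_leading_coeff H \<alpha> l p\<bar>"
  define C where "C = Phi_remainder_coeff H \<alpha> l p"
  define e where "e = 2*H - 2*real p - 1"
  define v where "v = 2*l + 1 + nat \<lceil>C / K\<rceil>"
  have K: "K > 0" unfolding K_def using Phi_leading_coeff_nonzero[OF assms] by simp
  have v: "v \<ge> 2*l" "v \<ge> 1" "real v > C / K" unfolding v_def by linarith+
  have "K * real v powr (e + 1) \<le> C * real v powr e"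
    using Phi_asymptotic_expansion[OF assms(1) v(1,2), of H]
    unfolding Phi_0 K_def C_def e_def by (simp add: abs_mult)
  then have "K * real v * real v powr e \<le> C * real v powr e"
    using v by (simp add: powr_add mult_ac)
  then have "K * real v \<le> C" using v by simp
  with v K show False by (simp add: field_simps)
qed

lemma Phi_zero_neg:
  assumes "is_filter \<alpha> l p" "p \<ge> 1" "1/2 < H" "H < 1"
  shows "Phi H \<alpha> l 0 < 0"
proof -
  obtain j where "Phi H \<alpha> l j \<noteq> 0" using Phi_not_identically_zero[OF assms(1,3,4)] by blast
  moreover have "\<bar>Phi H \<alpha> l j\<bar> \<le> - Phi H \<alpha> l 0"
    using assms by (intro abs_Phi_le_Phi_zero) auto
  ultimately show ?thesis by linarith
qed

definition kappa :: "real \<Rightarrow> real \<Rightarrow> real" where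
  "kappa t H = ((4 * H - 1) / (8 * (2 * H + 1))) / (- t / 4)"

definition Psi :: "real \<Rightarrow> real \<Rightarrow> (nat \<Rightarrow> real) \<Rightarrow> nat \<Rightarrow> nat \<Rightarrow> int \<Rightarrow> real" where
  "Psi t H \<alpha> l N j = Phi H \<alpha> l j + kappa t H * Phi (H + 1/2) \<alpha> l j / real N"

lemma piN_eq_Psi:
  assumes "t > 0" "N \<ge> 1"
  shows "piN t H \<alpha> l N j = (- t / 4) * real N powr (- 2 * H) * Psi t H \<alpha> l N j"
proof -
  have powr_eq: "real N powr (- 2 * H - 1) = real N powr (- 2 * H) / real N"
    using assms(2) by (simp add: powr_diff)
  have cancel: "c * (x / c) = x" if "c \<noteq> 0" for c x :: real
    using that by simp
  have k2: "(4*H-1)/(8*(2*H+1)) = (-t/4) * kappa t H"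
    unfolding kappa_def by (rule cancel[symmetric]) (use assms(1) in simp)
  show ?thesis unfolding piN_def Psi_def powr_eq k2 by (simp add: algebra_simps)
qed

lemma rhoN_eq_Psi:
  assumes "t > 0" "N \<ge> 1"
  shows "rhoN t H \<alpha> l N j = Psi t H \<alpha> l N j / Psi t H \<alpha> l N 0"
  using assms unfolding rhoN_def piN_eq_Psi[OF assms] by simp

lemma Psi_uminus: "Psi t H \<alpha> l N (-j) = Psi t H \<alpha> l N j"
  unfolding Psi_def Phi_uminus ..

lemma Psi_tendsto_Phi: "(\<lambda>N. Psi t H \<alpha> l N j) \<longlonglongrightarrow> Phi H \<alpha> l j"
proof -
  have "(\<lambda>N. Phi H \<alpha> l j + kappa t H * Phi (H + 1/2) \<alpha> l j * (1 / real N))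
      \<longlonglongrightarrow> Phi H \<alpha> l j + kappa t H * Phi (H + 1/2) \<alpha> l j * 0"
    by (intro tendsto_intros lim_inverse_n')
  then show ?thesis by (simp add: Psi_def)
qed

lemma eventually_abs_Psi_zero_ge:
  assumes "Phi H \<alpha> l 0 < 0"
  shows "\<forall>\<^sub>F N in sequentially. \<bar>Phi H \<alpha> l 0\<bar> / 2 \<le> \<bar>Psi t H \<alpha> l N 0\<bar>"
proof -
  have "\<forall>\<^sub>F N in sequentially. dist (Psi t H \<alpha> l N 0) (Phi H \<alpha> l 0) < \<bar>Phi H \<alpha> l 0\<bar> / 2"
    using assms by (intro tendstoD[OF Psi_tendsto_Phi]) simp
  then show ?thesis
    by eventually_elim (unfold dist_real_def, linarith)
qed

lemma abs_Psi_le_powr: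
  assumes "\<forall>v\<ge>1. \<bar>Phi H \<alpha> l (int v)\<bar> \<le> C\<^sub>1 * real v powr e"
    and "\<forall>v\<ge>1. \<bar>Phi (H + 1/2) \<alpha> l (int v)\<bar> \<le> C\<^sub>2 * real v powr (e + 1)"
    and v: "1 \<le> v" "v \<le> N"
  shows "\<bar>Psi t H \<alpha> l N (int v)\<bar> \<le> (C\<^sub>1 + \<bar>kappa t H\<bar> * C\<^sub>2) * real v powr e"
proof -
  have "C\<^sub>2 \<ge> 0" using assms(2) by force
  have "\<bar>Psi t H \<alpha> l N (int v)\<bar> \<le> \<bar>Phi H \<alpha> l (int v)\<bar> + \<bar>kappa t H\<bar> * \<bar>Phi (H + 1/2) \<alpha> l (int v)\<bar> / real N"
    unfolding Psi_def using v by (auto simp: abs_mult intro: order_trans[OF abs_triangle_ineq])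
  also have "\<dots> \<le> C\<^sub>1 * real v powr e + \<bar>kappa t H\<bar> * (C\<^sub>2 * real v powr (e + 1)) / real N"
    using assms v by (intro add_mono divide_right_mono mult_left_mono) auto
  also have "\<bar>kappa t H\<bar> * (C\<^sub>2 * real v powr (e + 1)) / real N
      = \<bar>kappa t H\<bar> * C\<^sub>2 * real v powr e * (real v / real N)"
    using v by (simp add: powr_add)
  also have "\<dots> \<le> \<bar>kappa t H\<bar> * C\<^sub>2 * real v powr e"
    using v \<open>C\<^sub>2 \<ge> 0\<close> by (intro mult_left_le) auto
  finally show ?thesis by (simp add: algebra_simps)
qed

lemma eventually_abs_rhoN_le_powr:
  assumes "is_filter \<alpha> l p" "p \<ge> 1" "1/2 < H" "H < 1" "t > 0"
  shows "\<exists>R. \<forall>\<^sub>F N in sequentially. \<forall>v. 1 \<le> v \<longrightarrow> v \<le> N \<longrightarrow>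
           \<bar>rhoN t H \<alpha> l N (int v)\<bar> \<le> R * real v powr (2*H - 2*real p)"
proof -
  define e where "e = 2*H - 2*real p"
  obtain C\<^sub>1 where C\<^sub>1: "\<forall>v\<ge>1. \<bar>Phi H \<alpha> l (int v)\<bar> \<le> C\<^sub>1 * real v powr e"
    using abs_Phi_le_powr[OF assms(1), of H] unfolding e_def by blast
  have exponent: "2*(H + 1/2) - 2*real p = e + 1" unfolding e_def by simp
  obtain C\<^sub>2 where C\<^sub>2: "\<forall>v\<ge>1. \<bar>Phi (H + 1/2) \<alpha> l (int v)\<bar> \<le> C\<^sub>2 * real v powr (e + 1)"
    using abs_Phi_le_powr[OF assms(1), of "H + 1/2"] unfolding exponent by blast
  define A where "A = \<bar>Phi H \<alpha> l 0\<bar>"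
  have "Phi H \<alpha> l 0 < 0" using assms by (intro Phi_zero_neg) auto
  then have A: "A > 0" and "\<forall>\<^sub>F N in sequentially. A / 2 \<le> \<bar>Psi t H \<alpha> l N 0\<bar>"
    unfolding A_def using eventually_abs_Psi_zero_ge by auto
  from this(2) have "\<forall>\<^sub>F N in sequentially. \<forall>v. 1 \<le> v \<longrightarrow> v \<le> N \<longrightarrow>
      \<bar>rhoN t H \<alpha> l N (int v)\<bar> \<le> (C\<^sub>1 + \<bar>kappa t H\<bar> * C\<^sub>2) / (A / 2) * real v powr e"
  proof eventually_elim
    case (elim N)
    show ?case
    proof (intro allI impI)
      fix v assume v: "1 \<le> v" "v \<le> N"
      have Psi_v: "\<bar>Psi t H \<alpha> l N (int v)\<bar> \<le> (C\<^sub>1 + \<bar>kappa t H\<bar> * C\<^sub>2) * real v powr e"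
        using abs_Psi_le_powr[OF C\<^sub>1 C\<^sub>2 v] .
      have "\<bar>rhoN t H \<alpha> l N (int v)\<bar> = \<bar>Psi t H \<alpha> l N (int v)\<bar> / \<bar>Psi t H \<alpha> l N 0\<bar>"
        using v assms(5) by (simp add: rhoN_eq_Psi abs_divide)
      also have "\<dots> \<le> (C\<^sub>1 + \<bar>kappa t H\<bar> * C\<^sub>2) * real v powr e / (A / 2)"
        using Psi_v elim A by (intro frac_le) (auto intro: order_trans[OF abs_ge_zero Psi_v])
      finally show "\<bar>rhoN t H \<alpha> l N (int v)\<bar> \<le> (C\<^sub>1 + \<bar>kappa t H\<bar> * C\<^sub>2) / (A / 2) * real v powr e"
        by (simp only: times_divide_eq_left)
    qed
  qed
  then show ?thesis unfolding e_def by blast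
qed

section \<open>Toeplitz double sums\<close>

lemma sum_sum_diff_shift:
  "(\<Sum>i=l..n+l. \<Sum>j=l..n+l. F (int j - int i)) = (\<Sum>i=0..n. \<Sum>j=0..n. F (int j - int i))"
  using sum.shift_bounds_cl_nat_ivl[of "\<lambda>i. \<Sum>j=l..n+l. F (int j - int i)" 0 l n]
    sum.shift_bounds_cl_nat_ivl[of "\<lambda>j. F (int j - int (i + l))" 0 l n for i]
  by simp

lemma sum_diff_reflect: "(\<Sum>i=0..n. g (int (Suc n) - int i)) = (\<Sum>v=1..Suc n. g (int v))"
proof -
  have "(\<lambda>i. Suc n - i) ` {0..n} = {1..Suc n}"
  proof (intro set_eqI iffI)
    fix v assume "v \<in> {1..Suc n}"
    then show "v \<in> (\<lambda>i. Suc n - i) ` {0..n}" by (intro image_eqI[of _ _ "Suc n - v"]) auto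
  qed auto
  then show ?thesis
    by (subst sum.reindex_bij_betw[symmetric, where h = "\<lambda>i. Suc n - i" and S = "{0..n}"])
       (auto simp: bij_betw_def inj_on_def of_nat_diff)
qed

lemma sum_sum_diff_even:
  fixes g :: "int \<Rightarrow> real"
  assumes even: "\<And>v. g (-v) = g v"
  shows "(\<Sum>i=0..n. \<Sum>j=0..n. g (int j - int i))
           = real (n+1) * g 0 + 2 * (\<Sum>v=1..n. (real n + 1 - real v) * g (int v))"
proof (induction n)
  case (Suc n)
  have row: "(\<Sum>i=0..n. g (int (Suc n) - int i)) = (\<Sum>v=1..Suc n. g (int v))"
    by (rule sum_diff_reflect)
  moreover have "(\<Sum>j=0..n. g (int j - int (Suc n))) = (\<Sum>v=1..Suc n. g (int v))"
    unfolding row[symmetric] by (intro sum.cong refl) (metis even minus_diff_eq)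
  ultimately have "(\<Sum>i=0..Suc n. \<Sum>j=0..Suc n. g (int j - int i))
      = (\<Sum>i=0..n. \<Sum>j=0..n. g (int j - int i)) + 2 * (\<Sum>v=1..Suc n. g (int v)) + g 0"
    by (simp add: sum.distrib)
  also have "\<dots> = real (Suc n + 1) * g 0 + 2 * (\<Sum>v=1..Suc n. (real (Suc n) + 1 - real v) * g (int v))"
  proof -
    have "(\<Sum>v=1..Suc n. (real (Suc n) + 1 - real v) * g (int v))
        = (\<Sum>v=1..Suc n. (real n + 1 - real v) * g (int v)) + (\<Sum>v=1..Suc n. g (int v))"
      by (simp add: sum.distrib[symmetric] algebra_simps)
    then show ?thesis unfolding Suc.IH by (simp add: distrib_right)
  qed
  finally show ?case .
qed simp

lemma rhoN_double_sum_eq: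
  assumes "t > 0" "n \<ge> 1" "Psi t H \<alpha> l (n+l) 0 \<noteq> 0"
  shows "(1 / (real (n+l) - real l)) * (\<Sum>i=l..n+l. \<Sum>j=l..n+l. rhoN t H \<alpha> l (n+l) (int j - int i) ^ m)
     = (real n + 1) / real n + 2 * (\<Sum>v=1..n. (real n + 1 - real v) / real n * rhoN t H \<alpha> l (n+l) (int v) ^ m)"
proof -
  define g where "g j = rhoN t H \<alpha> l (n+l) j ^ m" for j
  have "n + l \<ge> 1" using assms(2) by simp
  then have even: "g (-v) = g v" and g0: "g 0 = 1" for v
    using assms(1,3) by (simp_all add: g_def rhoN_eq_Psi Psi_uminus)
  have "(\<Sum>i=l..n+l. \<Sum>j=l..n+l. g (int j - int i)) = real (n+1) + 2 * (\<Sum>v=1..n. (real n + 1 - real v) * g (int v))"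
    unfolding sum_sum_diff_shift sum_sum_diff_even[of g, OF even] g0 by simp
  then show ?thesis
    unfolding g_def[symmetric] using assms(2)
    by (simp add: sum_divide_distrib[symmetric] add_divide_distrib algebra_simps)
qed

lemma has_sum_even_int:
  fixes g :: "int \<Rightarrow> real"
  assumes "(\<lambda>k. g (int (Suc k))) sums T" and even: "\<And>v. g (-v) = g v" and "\<And>v. g v \<ge> 0"
  shows "(g has_sum (g 0 + 2*T)) UNIV"
proof -
  define pos where "pos k = int (Suc k)" for k
  define neg where "neg k = - int (Suc k)" for k
  have "((\<lambda>k. g (int (Suc k))) has_sum T) UNIV"
    using assms by (intro sums_nonneg_imp_has_sum) auto
  moreover have "g \<circ> pos = (\<lambda>k. g (int (Suc k)))" and "g \<circ> neg = (\<lambda>k. g (int (Suc k)))"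
    unfolding pos_def neg_def o_def even by simp_all
  moreover have "inj pos" and "inj neg" unfolding pos_def neg_def inj_on_def by simp_all
  ultimately have "(g has_sum T) (range pos)" and "(g has_sum T) (range neg)"
    by (simp_all add: has_sum_reindex)
  moreover have "(g has_sum g 0) {0}" using has_sum_finite[of "{0}" g] by simp
  moreover have "range pos \<inter> range neg = {}" and "{0} \<inter> (range pos \<union> range neg) = {}"
    unfolding pos_def neg_def by auto
  ultimately have "(g has_sum (g 0 + (T + T))) ({0} \<union> (range pos \<union> range neg))"
    by (intro has_sum_Un_disjoint)
  moreover have "{0} \<union> (range pos \<union> range neg) = UNIV"
  proof (intro set_eqI iffI)
    fix v :: int
    have "v = 0 \<or> v = pos (nat v - 1) \<or> v = neg (nat (-v) - 1)"
    proof (cases v "0::int" rule: linorder_cases)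
      case less
      then have "v = neg (nat (-v) - 1)" unfolding neg_def by simp
      then show ?thesis by blast
    next
      case greater
      then have "v = pos (nat v - 1)" unfolding pos_def by simp
      then show ?thesis by blast
    qed simp
    then show "v \<in> {0} \<union> (range pos \<union> range neg)" by blast
  qed auto
  ultimately have "(g has_sum (g 0 + (T + T))) UNIV" by (simp only:)
  then show ?thesis by (simp only: mult_2)
qed

lemma eventually_at_top_prod_uniform:
  assumes "\<forall>\<^sub>F n in F. \<forall>k. P k n"
  shows "\<forall>\<^sub>F (k :: nat, n) in at_top \<times>\<^sub>F F. P k n"
proof -
  have "\<forall>\<^sub>F (k' :: nat, n) in at_top \<times>\<^sub>F F. \<forall>k. P k n"
    using assms by (subst eventually_prod2) auto
  then show ?thesis by (rule eventually_mono) auto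
qed

text \<open>Dominated convergence (Tannery's theorem) for the Fejer-type means that appear after
  sorting a Toeplitz double sum by diagonals.\<close>

lemma tendsto_weighted_diagonal_sum:
  fixes a :: "nat \<Rightarrow> nat \<Rightarrow> real"
  assumes lim: "\<And>v. (\<lambda>n. a n v) \<longlonglongrightarrow> b v"
    and bound: "\<forall>\<^sub>F n in sequentially. \<forall>v. 1 \<le> v \<longrightarrow> v \<le> n \<longrightarrow> \<bar>a n v\<bar> \<le> M v"
    and "summable M" and M_nonneg: "\<And>v. M v \<ge> 0"
  shows "summable (\<lambda>v. b (Suc v))"
    and "(\<lambda>n. \<Sum>v=1..n. (real n + 1 - real v) / real n * a n v) \<longlonglongrightarrow> (\<Sum>v. b (Suc v))"
proof -
  define A where "A v n = (if 1 \<le> v \<and> v \<le> n then (real n + 1 - real v) / real n * a n v else 0)" for v n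
  define B where "B v = (if 1 \<le> v then b v else 0)" for v
  have lim_A: "(\<lambda>n. A v n) \<longlonglongrightarrow> B v" for v
  proof (cases "v \<ge> 1")
    case True
    have "(\<lambda>n. (real n + 1 - real v) / real n * a n v) \<longlonglongrightarrow> 1 * b v"
      by (intro tendsto_mult lim) real_asymp
    moreover have "\<forall>\<^sub>F n in sequentially. (real n + 1 - real v) / real n * a n v = A v n"
      using eventually_ge_at_top[of v] by eventually_elim (use True in \<open>simp add: A_def\<close>)
    ultimately show ?thesis using True by (simp add: B_def tendsto_cong)
  qed (simp add: A_def B_def)
  have "\<forall>\<^sub>F n in sequentially. \<forall>v. norm (A v n) \<le> M v"
    using bound
  proof eventually_elim
    case (elim n)
    have "(real n + 1 - real v) / real n * \<bar>a n v\<bar> \<le> 1 * M v" if "1 \<le> v" "v \<le> n" for v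
      using elim that by (intro mult_mono) auto
    then show ?case using M_nonneg by (auto simp: A_def abs_mult)
  qed
  then have bound_A: "\<forall>\<^sub>F (v, n) in at_top \<times>\<^sub>F sequentially. norm (A v n) \<le> M v"
    by (rule eventually_at_top_prod_uniform)
  note tannery = tannerys_theorem[OF lim_A bound_A \<open>summable M\<close> sequentially_bot]
  have "summable B" using summable_norm_cancel[OF tannery[THEN conjunct2, THEN conjunct1]] .
  note lim_suminf_A = tannery[THEN conjunct2, THEN conjunct2]
  have B_Suc: "(\<lambda>v. B (Suc v)) = (\<lambda>v. b (Suc v))" and "B 0 = 0" by (simp_all add: B_def)
  with \<open>summable B\<close> show "summable (\<lambda>v. b (Suc v))"
    by (simp only: summable_Suc_iff flip: B_Suc)
  have "suminf B = (\<Sum>v. b (Suc v))"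
    using suminf_split_head[OF \<open>summable B\<close>] \<open>B 0 = 0\<close> unfolding B_Suc by simp
  moreover have "suminf (\<lambda>v. A v n) = (\<Sum>v=1..n. (real n + 1 - real v) / real n * a n v)" for n
  proof -
    have "suminf (\<lambda>v. A v n) = (\<Sum>v\<in>{1..n}. A v n)" by (rule suminf_finite) (auto simp: A_def)
    also have "\<dots> = (\<Sum>v=1..n. (real n + 1 - real v) / real n * a n v)"
      by (intro sum.cong refl) (simp add: A_def)
    finally show ?thesis .
  qed
  ultimately show "(\<lambda>n. \<Sum>v=1..n. (real n + 1 - real v) / real n * a n v) \<longlonglongrightarrow> (\<Sum>v. b (Suc v))"
    using lim_suminf_A by simp
qed

section \<open>Convergence for \<open>H < p - 1/(4q)\<close>\<close>

lemma rhoN_tendsto_phi: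
  assumes "t > 0" "Phi H \<alpha> l 0 \<noteq> 0"
  shows "(\<lambda>N. rhoN t H \<alpha> l N j) \<longlonglongrightarrow> phi H \<alpha> l j"
proof -
  have "(\<lambda>N. Psi t H \<alpha> l N j / Psi t H \<alpha> l N 0) \<longlonglongrightarrow> phi H \<alpha> l j"
    unfolding phi_def using assms(2) by (intro tendsto_divide Psi_tendsto_Phi)
  moreover have "\<forall>\<^sub>F N in sequentially. Psi t H \<alpha> l N j / Psi t H \<alpha> l N 0 = rhoN t H \<alpha> l N j"
    using eventually_ge_at_top[of 1] by eventually_elim (simp add: rhoN_eq_Psi assms(1))
  ultimately show ?thesis by (rule Lim_transform_eventually)
qed

lemma tendsto_rhoN_power_weighted_sum:
  assumes "1/2 < H" "H < 1" "t > 0" "is_filter \<alpha> l p" "p \<ge> 1" "q \<ge> 1"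
    and "H < real p - 1 / (4 * real q)"
  shows "summable (\<lambda>v. phi H \<alpha> l (int (Suc v)) ^ (2*q))"
    and "(\<lambda>n. \<Sum>v=1..n. (real n + 1 - real v) / real n * rhoN t H \<alpha> l (n+l) (int v) ^ (2*q))
           \<longlonglongrightarrow> (\<Sum>v. phi H \<alpha> l (int (Suc v)) ^ (2*q))"
proof -
  define e where "e = 2*H - 2*real p"
  obtain R where "\<forall>\<^sub>F N in sequentially. \<forall>v. 1 \<le> v \<longrightarrow> v \<le> N \<longrightarrow>
      \<bar>rhoN t H \<alpha> l N (int v)\<bar> \<le> R * real v powr e"
    using eventually_abs_rhoN_le_powr[OF assms(4,5,1,2,3)] unfolding e_def by blast
  then have "\<forall>\<^sub>F n in sequentially. \<forall>v. 1 \<le> v \<longrightarrow> v \<le> n + l \<longrightarrow>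
      \<bar>rhoN t H \<alpha> l (n+l) (int v)\<bar> \<le> R * real v powr e"
    by (rule eventually_sequentially_seg[THEN iffD2])
  then have bound: "\<forall>\<^sub>F n in sequentially. \<forall>v. 1 \<le> v \<longrightarrow> v \<le> n \<longrightarrow>
      \<bar>rhoN t H \<alpha> l (n+l) (int v) ^ (2*q)\<bar> \<le> \<bar>R\<bar> ^ (2*q) * real v powr (real (2*q) * e)"
  proof eventually_elim
    case (elim n)
    show ?case
    proof (intro allI impI)
      fix v assume v: "1 \<le> v" "v \<le> n"
      have "\<bar>rhoN t H \<alpha> l (n+l) (int v)\<bar> \<le> R * real v powr e"
        using elim[rule_format, of v] v by simp
      also have "\<dots> \<le> \<bar>R\<bar> * real v powr e" by (intro mult_right_mono) auto
      finally have "\<bar>rhoN t H \<alpha> l (n+l) (int v)\<bar> \<le> \<bar>R\<bar> * real v powr e" .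
      then have "\<bar>rhoN t H \<alpha> l (n+l) (int v)\<bar> ^ (2*q) \<le> (\<bar>R\<bar> * real v powr e) ^ (2*q)"
        by (intro power_mono) auto
      then show "\<bar>rhoN t H \<alpha> l (n+l) (int v) ^ (2*q)\<bar> \<le> \<bar>R\<bar> ^ (2*q) * real v powr (real (2*q) * e)"
        using v by (simp add: power_abs power_mult_distrib powr_power)
    qed
  qed
  have summable: "summable (\<lambda>v. \<bar>R\<bar> ^ (2*q) * real v powr (real (2*q) * e))"
  proof -
    have "e * (2 * real q) < - 1 / (2 * real q) * (2 * real q)"
      using assms(6,7) unfolding e_def by (intro mult_strict_right_mono) (auto simp: field_simps)
    then have "real (2*q) * e < -1" using assms(6) by (simp add: mult.commute)
    then show ?thesis by (intro summable_mult) (simp add: summable_real_powr_iff)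
  qed
  have "Phi H \<alpha> l 0 \<noteq> 0" using Phi_zero_neg[OF assms(4,5,1,2)] by simp
  then have lim: "(\<lambda>n. rhoN t H \<alpha> l (n+l) (int v) ^ (2*q)) \<longlonglongrightarrow> phi H \<alpha> l (int v) ^ (2*q)" for v
    by (intro tendsto_power LIMSEQ_ignore_initial_segment[OF rhoN_tendsto_phi] assms(3))
  show "summable (\<lambda>v. phi H \<alpha> l (int (Suc v)) ^ (2*q))"
    and "(\<lambda>n. \<Sum>v=1..n. (real n + 1 - real v) / real n * rhoN t H \<alpha> l (n+l) (int v) ^ (2*q))
           \<longlonglongrightarrow> (\<Sum>v. phi H \<alpha> l (int (Suc v)) ^ (2*q))"
    using tendsto_weighted_diagonal_sum[OF lim bound summable] by simp_all
qed

lemma eventually_Psi_zero_nonzero: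
  assumes "is_filter \<alpha> l p" "p \<ge> 1" "1/2 < H" "H < 1"
  shows "\<forall>\<^sub>F n in sequentially. n \<ge> 1 \<and> Psi t H \<alpha> l (n+l) 0 \<noteq> 0"
proof -
  have neg: "Phi H \<alpha> l 0 < 0" using Phi_zero_neg[OF assms] .
  have "\<forall>\<^sub>F n in sequentially. \<bar>Phi H \<alpha> l 0\<bar> / 2 \<le> \<bar>Psi t H \<alpha> l (n+l) 0\<bar>"
    using eventually_abs_Psi_zero_ge[OF neg] by (rule eventually_sequentially_seg[THEN iffD2])
  with eventually_ge_at_top[of 1] show ?thesis
    by eventually_elim (use neg in auto)
qed

lemma tendsto_rhoN_power_mean:
  assumes "1/2 < H" "H < 1" "t > 0" "is_filter \<alpha> l p" "p \<ge> 1" "q \<ge> 1"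
    and "H < real p - 1 / (4 * real q)"
  shows "\<exists>S. ((\<lambda>v. phi H \<alpha> l v ^ (2 * q)) has_sum S) UNIV \<and>
           ((\<lambda>N. (1 / (real N - real l)) *
              (\<Sum>i=l..N. \<Sum>j=l..N. rhoN t H \<alpha> l N (int j - int i) ^ (2 * q))) \<longlonglongrightarrow> S)"
proof (intro exI conjI)
  define L where "L = (\<Sum>v. phi H \<alpha> l (int (Suc v)) ^ (2*q))"
  have "phi H \<alpha> l 0 = 1" using Phi_zero_neg[OF assms(4,5,1,2)] by (simp add: phi_def)
  moreover have "(\<lambda>v. phi H \<alpha> l (int (Suc v)) ^ (2*q)) sums L"
    unfolding L_def using tendsto_rhoN_power_weighted_sum(1)[OF assms] by (rule summable_sums)
  ultimately show "((\<lambda>v. phi H \<alpha> l v ^ (2 * q)) has_sum (1 + 2 * L)) UNIV"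
    using has_sum_even_int[of "\<lambda>v. phi H \<alpha> l v ^ (2 * q)" L]
    by (simp add: phi_def Phi_uminus zero_le_even_power)
  have "(\<lambda>n. (real n + 1) / real n + 2 * (\<Sum>v=1..n. (real n + 1 - real v) / real n *
      rhoN t H \<alpha> l (n+l) (int v) ^ (2*q))) \<longlonglongrightarrow> 1 + 2 * L"
    unfolding L_def
    by (intro tendsto_add tendsto_mult_left tendsto_rhoN_power_weighted_sum(2)[OF assms]) real_asymp
  moreover have "\<forall>\<^sub>F n in sequentially. (real n + 1) / real n + 2 * (\<Sum>v=1..n. (real n + 1 - real v) / real n *
      rhoN t H \<alpha> l (n+l) (int v) ^ (2*q)) = (1 / (real (n+l) - real l)) *
      (\<Sum>i=l..n+l. \<Sum>j=l..n+l. rhoN t H \<alpha> l (n+l) (int j - int i) ^ (2 * q))"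
    using eventually_Psi_zero_nonzero[OF assms(4,5,1,2), of t]
    by eventually_elim (rule rhoN_double_sum_eq[symmetric, OF assms(3)], auto)
  ultimately have "(\<lambda>n. (1 / (real (n+l) - real l)) *
      (\<Sum>i=l..n+l. \<Sum>j=l..n+l. rhoN t H \<alpha> l (n+l) (int j - int i) ^ (2 * q))) \<longlonglongrightarrow> 1 + 2 * L"
    by (rule Lim_transform_eventually)
  then show "(\<lambda>N. (1 / (real N - real l)) *
      (\<Sum>i=l..N. \<Sum>j=l..N. rhoN t H \<alpha> l N (int j - int i) ^ (2 * q))) \<longlonglongrightarrow> 1 + 2 * L"
    by (rule LIMSEQ_offset)
qed

section \<open>Logarithmic growth for \<open>p = 1\<close>, \<open>H = 3/4\<close>\<close>

lemma abs_Phi_sq_sub_leading_le: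
  assumes "is_filter \<alpha> l p"
  shows "\<exists>C. \<forall>v\<ge>1. \<bar>Phi x \<alpha> l (int v)^2 - (Phi_leading_coeff x \<alpha> l p)^2 * real v powr (2*(2*x - 2*real p))\<bar>
           \<le> C * real v powr (2*(2*x - 2*real p) - 1)"
proof -
  define e where "e = 2*x - 2*real p"
  define K where "K = Phi_leading_coeff x \<alpha> l p"
  obtain C\<^sub>1 where C\<^sub>1: "\<forall>v\<ge>1. \<bar>Phi x \<alpha> l (int v)\<bar> \<le> C\<^sub>1 * real v powr e"
    using abs_Phi_le_powr[OF assms, of x] unfolding e_def by blast
  define C where "C = Phi_remainder_coeff x \<alpha> l p"
  show ?thesis
    unfolding e_def[symmetric] K_def[symmetric]
  proof (rule eventually_powr_bound_imp_powr_bound)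
    fix v :: nat assume v: "v \<ge> 2*l + 1"
    define a where "a = Phi x \<alpha> l (int v)"
    define k where "k = K * real v powr e"
    have "\<bar>a - k\<bar> \<le> C * real v powr (e - 1)"
      using Phi_asymptotic_expansion[OF assms, of v x] v unfolding a_def k_def K_def C_def e_def by simp
    moreover have "\<bar>a + k\<bar> \<le> (C\<^sub>1 + \<bar>K\<bar>) * real v powr e"
    proof -
      have "\<bar>a\<bar> \<le> C\<^sub>1 * real v powr e" using C\<^sub>1 v unfolding a_def by simp
      moreover have "\<bar>k\<bar> = \<bar>K\<bar> * real v powr e" unfolding k_def by (simp add: abs_mult)
      ultimately show ?thesis using abs_triangle_ineq[of a k] by (simp add: distrib_right)
    qed
    ultimately have "\<bar>a - k\<bar> * \<bar>a + k\<bar> \<le> (C * real v powr (e - 1)) * ((C\<^sub>1 + \<bar>K\<bar>) * real v powr e)"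
      by (intro mult_mono) auto
    moreover have "a^2 - K^2 * real v powr (2*e) = (a - k) * (a + k)"
      unfolding k_def using v by (simp add: algebra_simps power2_eq_square powr_add[symmetric])
    moreover have "real v powr (e - 1) * real v powr e = real v powr (2*e - 1)"
      by (simp add: powr_add[symmetric])
    ultimately show "\<bar>a^2 - K^2 * real v powr (2*e)\<bar> \<le> C * (C\<^sub>1 + \<bar>K\<bar>) * real v powr (2*e - 1)"
      by (simp add: abs_mult mult_ac)
  qed
qed

lemma abs_sq_add_div_sub_sq_le:
  fixes a b \<kappa> N P Q :: real
  assumes "\<bar>a * b\<bar> \<le> P" "b^2 \<le> Q * N" "N > 0"
  shows "\<bar>(a + \<kappa> * b / N)^2 - a^2\<bar> \<le> (2 * \<bar>\<kappa>\<bar> * P + \<kappa>^2 * Q) / N"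
proof -
  have "(a + \<kappa> * b / N)^2 - a^2 = 2 * \<kappa> * (a * b) / N + \<kappa>^2 * (b^2 / N) / N"
    using assms(3) by (simp add: power2_eq_square field_simps)
  also have "\<bar>\<dots>\<bar> \<le> 2 * \<bar>\<kappa>\<bar> * P / N + \<kappa>^2 * Q / N"
  proof (rule order_trans[OF abs_triangle_ineq add_mono])
    show "\<bar>2 * \<kappa> * (a * b) / N\<bar> \<le> 2 * \<bar>\<kappa>\<bar> * P / N"
      using assms(1,3) by (simp add: abs_mult divide_right_mono mult_left_mono)
    have "b^2 / N \<le> Q" using assms(2,3) by (simp add: pos_divide_le_eq)
    then have "\<kappa>^2 * (b^2 / N) / N \<le> \<kappa>^2 * Q / N"
      using assms(3) by (intro divide_right_mono mult_left_mono) auto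
    moreover have "0 \<le> \<kappa>^2 * (b^2 / N) / N" using assms(3) by simp
    ultimately show "\<bar>\<kappa>^2 * (b^2 / N) / N\<bar> \<le> \<kappa>^2 * Q / N" by simp
  qed
  also have "\<dots> = (2 * \<bar>\<kappa>\<bar> * P + \<kappa>^2 * Q) / N" by (simp add: add_divide_distrib)
  finally show ?thesis .
qed

lemma abs_Psi_sq_sub_Phi_sq_le:
  assumes "is_filter \<alpha> l p"
  shows "\<exists>C. \<forall>N v. 1 \<le> v \<longrightarrow> v \<le> N \<longrightarrow>
           \<bar>Psi t H \<alpha> l N (int v)^2 - Phi H \<alpha> l (int v)^2\<bar> \<le> C * real v powr (2*(2*H - 2*real p) + 1) / real N"
proof -
  define e where "e = 2*H - 2*real p"
  define \<kappa> where "\<kappa> = kappa t H"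
  obtain C\<^sub>1 where C\<^sub>1: "\<forall>v\<ge>1. \<bar>Phi H \<alpha> l (int v)\<bar> \<le> C\<^sub>1 * real v powr e"
    using abs_Phi_le_powr[OF assms, of H] unfolding e_def by blast
  have exponent: "2*(H + 1/2) - 2*real p = e + 1" unfolding e_def by simp
  obtain C\<^sub>2 where C\<^sub>2: "\<forall>v\<ge>1. \<bar>Phi (H + 1/2) \<alpha> l (int v)\<bar> \<le> C\<^sub>2 * real v powr (e + 1)"
    using abs_Phi_le_powr[OF assms, of "H + 1/2"] unfolding exponent by blast
  have "\<bar>Psi t H \<alpha> l N (int v)^2 - Phi H \<alpha> l (int v)^2\<bar>
      \<le> (2 * \<bar>\<kappa>\<bar> * C\<^sub>1 * C\<^sub>2 + \<kappa>^2 * C\<^sub>2^2) * real v powr (2*e + 1) / real N"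
    if v: "1 \<le> v" "v \<le> N" for N v
  proof -
    define a where "a = Phi H \<alpha> l (int v)"
    define b where "b = Phi (H + 1/2) \<alpha> l (int v)"
    have N: "real N > 0" using v by simp
    have a: "\<bar>a\<bar> \<le> C\<^sub>1 * real v powr e" and b: "\<bar>b\<bar> \<le> C\<^sub>2 * real v powr (e + 1)"
      using C\<^sub>1 C\<^sub>2 v unfolding a_def b_def by auto
    have "\<bar>a * b\<bar> \<le> (C\<^sub>1 * real v powr e) * (C\<^sub>2 * real v powr (e + 1))"
      unfolding abs_mult using a b by (intro mult_mono) (auto intro: order_trans[OF abs_ge_zero a])
    also have "\<dots> = C\<^sub>1 * C\<^sub>2 * real v powr (2*e + 1)"
      by (simp add: powr_add[symmetric] mult_ac)
    finally have ab: "\<bar>a * b\<bar> \<le> C\<^sub>1 * C\<^sub>2 * real v powr (2*e + 1)" .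
    have "b^2 = \<bar>b\<bar>^2" by simp
    also have "\<dots> \<le> (C\<^sub>2 * real v powr (e + 1))^2"
      using b by (intro power_mono abs_ge_zero)
    also have "\<dots> = C\<^sub>2^2 * (real v powr (e + 1) * real v powr (e + 1))"
      by (simp add: power2_eq_square)
    also have "real v powr (e + 1) * real v powr (e + 1) = real v powr (2*e + 1) * real v powr 1"
      by (simp only: powr_add[symmetric]) (simp add: algebra_simps)
    finally have bb: "b^2 \<le> C\<^sub>2^2 * real v powr (2*e + 1) * real v"
      using v by (simp add: mult_ac)
    have "C\<^sub>2^2 * real v powr (2*e + 1) * real v \<le> C\<^sub>2^2 * real v powr (2*e + 1) * real N"
      using v by (intro mult_left_mono) auto
    with bb have "b^2 \<le> C\<^sub>2^2 * real v powr (2*e + 1) * real N" by linarith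
    moreover have "Psi t H \<alpha> l N (int v) = a + \<kappa> * b / real N"
      unfolding Psi_def a_def b_def \<kappa>_def by simp
    ultimately have "\<bar>Psi t H \<alpha> l N (int v)^2 - a^2\<bar>
        \<le> (2 * \<bar>\<kappa>\<bar> * (C\<^sub>1 * C\<^sub>2 * real v powr (2*e + 1)) + \<kappa>^2 * (C\<^sub>2^2 * real v powr (2*e + 1))) / real N"
      using abs_sq_add_div_sub_sq_le[OF ab _ N] by simp
    also have "\<dots> = (2 * \<bar>\<kappa>\<bar> * C\<^sub>1 * C\<^sub>2 + \<kappa>^2 * C\<^sub>2^2) * real v powr (2*e + 1) / real N"
      by (simp add: algebra_simps)
    finally show ?thesis unfolding a_def .
  qed
  then show ?thesis unfolding e_def by blast
qed

lemma abs_weighted_diagonal_sum_le: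
  fixes g :: "nat \<Rightarrow> real"
  assumes "\<And>v. 1 \<le> v \<Longrightarrow> v \<le> n \<Longrightarrow> \<bar>g v\<bar> \<le> A * real v powr (-2) + B / real n"
    and "A \<ge> 0" "B \<ge> 0"
  shows "\<bar>\<Sum>v=1..n. (real n + 1 - real v) / real n * g v\<bar> \<le> A * (\<Sum>v. real v powr (-2)) + B"
proof -
  have "\<bar>\<Sum>v=1..n. (real n + 1 - real v) / real n * g v\<bar> \<le> (\<Sum>v=1..n. A * real v powr (-2) + B / real n)"
  proof (rule order_trans[OF sum_abs sum_mono])
    fix v assume v: "v \<in> {1..n}"
    then have "\<bar>(real n + 1 - real v) / real n * g v\<bar> = (real n + 1 - real v) / real n * \<bar>g v\<bar>"
      by (simp add: abs_mult)
    also have "\<dots> \<le> 1 * (A * real v powr (-2) + B / real n)"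
      using v assms(1)[of v] by (intro mult_mono) auto
    finally show "\<bar>(real n + 1 - real v) / real n * g v\<bar> \<le> A * real v powr (-2) + B / real n" by simp
  qed
  also have "\<dots> = A * (\<Sum>v=1..n. real v powr (-2)) + real n * (B / real n)"
    by (simp add: sum.distrib sum_distrib_left)
  also have "\<dots> \<le> A * (\<Sum>v. real v powr (-2)) + B"
    using assms(2,3) by (intro add_mono mult_left_mono sum_le_suminf) (auto simp: summable_real_powr_iff)
  finally show ?thesis .
qed

lemma sum_weighted_inverse: "(\<Sum>v=1..n. (real n + 1 - real v) / real v) = (real n + 1) * harm n - real n"
proof -
  have "(\<Sum>v=1..n. (real n + 1 - real v) / real v) = (\<Sum>v=1..n. (real n + 1) * inverse (real v) - 1)"
    by (intro sum.cong refl) (auto simp: field_simps)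
  also have "\<dots> = (real n + 1) * harm n - real n"
    by (simp add: sum_subtractf sum_distrib_left harm_def)
  finally show ?thesis .
qed

lemma weighted_harmonic_asymp:
  "(\<lambda>n. ((real n + 1) * harm n - real n) / (real n * ln (real n))) \<longlonglongrightarrow> (1::real)"
proof -
  have "(\<lambda>n. (real n + 1) / real n * (1 + (harm n - ln (real n)) * (1 / ln (real n))) - 1 / ln (real n))
      \<longlonglongrightarrow> 1 * (1 + euler_mascheroni * 0) - (0::real)"
    by (intro tendsto_intros euler_mascheroni_LIMSEQ; real_asymp)
  moreover have "\<forall>\<^sub>F n in sequentially.
      (real n + 1) / real n * (1 + (harm n - ln (real n)) * (1 / ln (real n))) - 1 / ln (real n)
      = ((real n + 1) * harm n - real n) / (real n * ln (real n))"
    using eventually_ge_at_top[of 2]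
  proof eventually_elim
    case (elim n)
    then have "ln (real n) > 0" "real n > 0" by auto
    then show ?case by (simp add: field_simps)
  qed
  ultimately show ?thesis by (simp add: Lim_transform_eventually)
qed

lemma rhoN_square_mean_log_decomposition:
  assumes "t > 0" "n \<ge> 2" "Psi t H \<alpha> l (n+l) 0 \<noteq> 0"
  shows "(1 / ((real (n+l) - real l) * ln (real (n+l) - real l))) *
           (\<Sum>i=l..n+l. \<Sum>j=l..n+l. rhoN t H \<alpha> l (n+l) (int j - int i) ^ 2)
     = ((real n + 1) / real n) / ln (real n) + 2 / (Psi t H \<alpha> l (n+l) 0)^2 *
         (K^2 * (((real n + 1) * harm n - real n) / (real n * ln (real n))) +
          (\<Sum>v=1..n. (real n + 1 - real v) / real n * (Psi t H \<alpha> l (n+l) (int v)^2 - K^2 / real v))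
            / ln (real n))"
proof -
  define D where "D = Psi t H \<alpha> l (n+l) 0"
  define E where "E = (\<Sum>v=1..n. (real n + 1 - real v) / real n * (Psi t H \<alpha> l (n+l) (int v)^2 - K^2 / real v))"
  have n: "n \<ge> 1" "real n > 0" "ln (real n) > 0" using assms(2) by auto
  have "(\<Sum>v=1..n. (real n + 1 - real v) / real n * rhoN t H \<alpha> l (n+l) (int v) ^ 2)
      = (\<Sum>v=1..n. (real n + 1 - real v) / real n * Psi t H \<alpha> l (n+l) (int v)^2) / D^2"
    using assms(1) n by (simp add: sum_divide_distrib rhoN_eq_Psi D_def power_divide)
  also have "(\<Sum>v=1..n. (real n + 1 - real v) / real n * Psi t H \<alpha> l (n+l) (int v)^2)
      = K^2 * (\<Sum>v=1..n. (real n + 1 - real v) / real v) / real n + E"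
    unfolding E_def by (simp add: sum.distrib[symmetric] sum_distrib_left sum_divide_distrib algebra_simps)
  finally have sum_rho: "(\<Sum>v=1..n. (real n + 1 - real v) / real n * rhoN t H \<alpha> l (n+l) (int v) ^ 2)
      = (K^2 * ((real n + 1) * harm n - real n) / real n + E) / D^2"
    unfolding sum_weighted_inverse .
  have "(1 / ((real (n+l) - real l) * ln (real (n+l) - real l))) *
      (\<Sum>i=l..n+l. \<Sum>j=l..n+l. rhoN t H \<alpha> l (n+l) (int j - int i) ^ 2)
      = (1 / (real (n+l) - real l) * (\<Sum>i=l..n+l. \<Sum>j=l..n+l. rhoN t H \<alpha> l (n+l) (int j - int i) ^ 2))
        / ln (real n)"
    by simp
  also have "\<dots> = ((real n + 1) / real n + 2 * ((K^2 * ((real n + 1) * harm n - real n) / real n + E) / D^2))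
      / ln (real n)"
    unfolding rhoN_double_sum_eq[OF assms(1) n(1) assms(3)] sum_rho ..
  also have "\<dots> = ((real n + 1) / real n) / ln (real n) + 2 / D^2 *
      (K^2 * (((real n + 1) * harm n - real n) / (real n * ln (real n))) + E / ln (real n))"
    using n assms(3) unfolding D_def by (simp add: field_simps)
  finally show ?thesis unfolding D_def E_def .
qed

lemma abs_Psi_sq_sub_leading_weighted_sum_le:
  assumes "is_filter \<alpha> l 1"
  shows "\<exists>E. \<forall>n\<ge>1. \<bar>\<Sum>v=1..n. (real n + 1 - real v) / real n *
           (Psi t (3/4) \<alpha> l (n+l) (int v)^2 - (Phi_leading_coeff (3/4) \<alpha> l 1)^2 / real v)\<bar> \<le> E"
proof -
  define K where "K = Phi_leading_coeff (3/4) \<alpha> l 1"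
  have exponents: "2 * (2 * (3/4) - 2 * real (1::nat)) = (-1::real)" "(-1::real) - 1 = -2"
    "(-1::real) + 1 = 0" by simp_all
  obtain A where A: "\<forall>v\<ge>1. \<bar>Phi (3/4) \<alpha> l (int v)^2 - K^2 * real v powr (-1)\<bar> \<le> A * real v powr (-2)"
    using abs_Phi_sq_sub_leading_le[OF assms, of "3/4"] unfolding K_def exponents by blast
  obtain B where B: "\<forall>N v. 1 \<le> v \<longrightarrow> v \<le> N \<longrightarrow>
      \<bar>Psi t (3/4) \<alpha> l N (int v)^2 - Phi (3/4) \<alpha> l (int v)^2\<bar> \<le> B * real v powr 0 / real N"
    using abs_Psi_sq_sub_Phi_sq_le[OF assms, of t "3/4"] unfolding exponents by blast
  have "A \<ge> 0" using A[rule_format, of 1] by (simp add: order_trans[OF abs_ge_zero])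
  have "B \<ge> 0" using B[rule_format, of 1 1] by (simp add: order_trans[OF abs_ge_zero])
  have "\<bar>Psi t (3/4) \<alpha> l (n+l) (int v)^2 - K^2 / real v\<bar> \<le> A * real v powr (-2) + B / real n"
    if v: "1 \<le> v" "v \<le> n" for n v
  proof -
    have "\<bar>Phi (3/4) \<alpha> l (int v)^2 - K^2 / real v\<bar> \<le> A * real v powr (-2)"
      using A v by (simp add: powr_minus_divide)
    moreover have "\<bar>Psi t (3/4) \<alpha> l (n+l) (int v)^2 - Phi (3/4) \<alpha> l (int v)^2\<bar> \<le> B / real (n+l)"
      using B[rule_format, of v "n+l"] v by simp
    moreover have "B / real (n+l) \<le> B / real n"
      using v \<open>B \<ge> 0\<close> by (intro divide_left_mono) auto
    ultimately show ?thesis by linarith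
  qed
  then have "\<bar>\<Sum>v=1..n. (real n + 1 - real v) / real n * (Psi t (3/4) \<alpha> l (n+l) (int v)^2 - K^2 / real v)\<bar>
      \<le> A * (\<Sum>v. real v powr (-2)) + B" for n
    using \<open>A \<ge> 0\<close> \<open>B \<ge> 0\<close> by (rule abs_weighted_diagonal_sum_le)
  then show ?thesis unfolding K_def by blast
qed

lemma bounded_div_ln_tendsto_zero:
  fixes f :: "nat \<Rightarrow> real"
  assumes "\<forall>n\<ge>1. \<bar>f n\<bar> \<le> B"
  shows "(\<lambda>n. f n / ln (real n)) \<longlonglongrightarrow> 0"
proof (rule Lim_null_comparison)
  show "\<forall>\<^sub>F n in sequentially. norm (f n / ln (real n)) \<le> B * (1 / ln (real n))"
    using eventually_ge_at_top[of 2]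
    by eventually_elim (use assms in \<open>auto simp: abs_divide divide_right_mono\<close>)
  show "(\<lambda>n. B * (1 / ln (real n))) \<longlonglongrightarrow> 0" by real_asymp
qed

lemma tendsto_rhoN_square_mean_log:
  assumes "t > 0" "is_filter \<alpha> l 1"
  shows "\<exists>c>0. (\<lambda>N. (1 / ((real N - real l) * ln (real N - real l))) *
           (\<Sum>i=l..N. \<Sum>j=l..N. rhoN t (3/4) \<alpha> l N (int j - int i) ^ 2)) \<longlonglongrightarrow> c"
proof -
  define K where "K = Phi_leading_coeff (3/4) \<alpha> l 1"
  define A where "A = Phi (3/4) \<alpha> l 0"
  define D where "D n = Psi t (3/4) \<alpha> l (n+l) 0" for n
  define E where "E n = (\<Sum>v=1..n. (real n + 1 - real v) / real n *
      (Psi t (3/4) \<alpha> l (n+l) (int v)^2 - K^2 / real v))" for n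
  define X where "X n = ((real n + 1) * harm n - real n) / (real n * ln (real n))" for n
  have H: "1/2 < (3/4::real)" "(3/4::real) < 1" by simp_all
  have "K \<noteq> 0" unfolding K_def using Phi_leading_coeff_nonzero[OF assms(2) H] .
  have "A < 0" unfolding A_def using Phi_zero_neg[OF assms(2) order_refl H] .
  obtain bound where bound: "\<forall>n\<ge>1. \<bar>E n\<bar> \<le> bound"
    using abs_Psi_sq_sub_leading_weighted_sum_le[OF assms(2), of t] unfolding E_def K_def by blast
  have "(\<lambda>n. E n / ln (real n)) \<longlonglongrightarrow> 0"
    using bound by (rule bounded_div_ln_tendsto_zero)
  moreover have "D \<longlonglongrightarrow> A"
    unfolding D_def A_def by (rule LIMSEQ_ignore_initial_segment[OF Psi_tendsto_Phi])
  moreover have "(\<lambda>n. ((real n + 1) / real n) / ln (real n)) \<longlonglongrightarrow> 0" by real_asymp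
  ultimately have "(\<lambda>n. ((real n + 1) / real n) / ln (real n) + 2 / (D n)^2 * (K^2 * X n + E n / ln (real n)))
      \<longlonglongrightarrow> 0 + 2 / A^2 * (K^2 * 1 + 0)"
    unfolding X_def using \<open>A < 0\<close> by (intro tendsto_intros weighted_harmonic_asymp) auto
  then have "(\<lambda>n. ((real n + 1) / real n) / ln (real n) + 2 / (D n)^2 * (K^2 * X n + E n / ln (real n)))
      \<longlonglongrightarrow> 2 / A^2 * K^2"
    by simp
  moreover have "\<forall>\<^sub>F n in sequentially.
      ((real n + 1) / real n) / ln (real n) + 2 / (D n)^2 * (K^2 * X n + E n / ln (real n))
      = (1 / ((real (n+l) - real l) * ln (real (n+l) - real l))) *
          (\<Sum>i=l..n+l. \<Sum>j=l..n+l. rhoN t (3/4) \<alpha> l (n+l) (int j - int i) ^ 2)"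
    using eventually_Psi_zero_nonzero[OF assms(2) order_refl H, where t = t] eventually_ge_at_top[of 2]
  proof eventually_elim
    case (elim n)
    then show ?case
      unfolding D_def E_def X_def by (intro rhoN_square_mean_log_decomposition[OF assms(1), symmetric]) auto
  qed
  ultimately have "(\<lambda>n. (1 / ((real (n+l) - real l) * ln (real (n+l) - real l))) *
      (\<Sum>i=l..n+l. \<Sum>j=l..n+l. rhoN t (3/4) \<alpha> l (n+l) (int j - int i) ^ 2)) \<longlonglongrightarrow> 2 / A^2 * K^2"
    by (rule Lim_transform_eventually)
  then have "(\<lambda>N. (1 / ((real N - real l) * ln (real N - real l))) *
      (\<Sum>i=l..N. \<Sum>j=l..N. rhoN t (3/4) \<alpha> l N (int j - int i) ^ 2)) \<longlonglongrightarrow> 2 / A^2 * K^2"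
    by (rule LIMSEQ_offset)
  moreover have "2 / A^2 * K^2 > 0" using \<open>A < 0\<close> \<open>K \<noteq> 0\<close> by simp
  ultimately show ?thesis by blast
qed

theorem mainTheorem1:
  fixes t H :: real and \<alpha> :: "nat \<Rightarrow> real" and l p q :: nat
  assumes "1/2 < H" "H < 1" "t > 1"
    and "is_filter \<alpha> l p" "p \<ge> 1" "q \<ge> 1"
  shows "(H < real p - 1 / (4 * real q) \<longrightarrow>
           (\<exists>S. ((\<lambda>v. phi H \<alpha> l v ^ (2 * q)) has_sum S) UNIV \<and>
                ((\<lambda>N. (1 / (real N - real l)) *
                    (\<Sum>i=l..N. \<Sum>j=l..N. rhoN t H \<alpha> l N (int j - int i) ^ (2 * q)))
                 \<longlonglongrightarrow> S)))
       \<and> (p = 1 \<and> H = 3/4 \<longrightarrow>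
           (\<exists>c > 0. (\<lambda>N. (1 / ((real N - real l) * ln (real N - real l))) *
                    (\<Sum>i=l..N. \<Sum>j=l..N. rhoN t H \<alpha> l N (int j - int i) ^ 2))
                 \<longlonglongrightarrow> c))"
proof (intro conjI impI)
  have "t > 0" using assms(3) by simp
  show "\<exists>S. ((\<lambda>v. phi H \<alpha> l v ^ (2 * q)) has_sum S) UNIV \<and>
          ((\<lambda>N. (1 / (real N - real l)) *
             (\<Sum>i=l..N. \<Sum>j=l..N. rhoN t H \<alpha> l N (int j - int i) ^ (2 * q))) \<longlonglongrightarrow> S)"
    if "H < real p - 1 / (4 * real q)"
    using tendsto_rhoN_power_mean[OF assms(1,2) \<open>t > 0\<close> assms(4-6) that] .
  show "\<exists>c > 0. (\<lambda>N. (1 / ((real N - real l) * ln (real N - real l))) *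
          (\<Sum>i=l..N. \<Sum>j=l..N. rhoN t H \<alpha> l N (int j - int i) ^ 2)) \<longlonglongrightarrow> c"
    if "p = 1 \<and> H = 3/4"
  proof -
    from that have p: "p = 1" and H: "H = 3/4" by auto
    show ?thesis
      unfolding H using tendsto_rhoN_square_mean_log[OF \<open>t > 0\<close> assms(4)[unfolded p]] .
  qed
qed

end
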